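(* Let $\alpha\ge 0$ and let $u_0,v_0,c\in\mathcal C([0,1])$ with $u_0,v_0\ge 0$ and $0<\underline c\le c(x)\le\overline c$ on $[0,1]$, where $\underline c,\overline c$ are constants. Assume either that $u_0(0)=0$ and $v_0(1)=0$ (case (DBC)), or that $u_0(0)=u_0(1)$, $v_0(0)=v_0(1)$ and $c(0)=c(1)$ (case (PBC)). Then the corresponding problem (system (S) with the (DBC), resp. (PBC), boundary conditions and initial data $u(\cdot,0)=u_0$, $v(\cdot,0)=v_0$) has a unique global mild solution $(u,v)$, and it satisfies, for all $x\in[0,1]$, $t\ge 0$, $$0\le u(x,t)\le \frac{\overline c}{\underline c}\max\Big\{\max_{[0,1]}u_0,\ \alpha\Big\},\qquad 0\le v(x,t)\le \frac{\overline c}{\underline c}\max\Big\{\max_{[0,1]}v_0,\ \alpha\Big\}.$$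
   Context: System (S): for $x\in[0,1]$, $t>0$, $$\partial_t u+\partial_x(c(x)u)=\frac{\alpha v}{1+u+v}-u,\qquad \partial_t v-\partial_x(c(x)v)=\frac{\alpha u}{1+u+v}-v.$$ Boundary conditions: (DBC) $u(0,t)=0$, $v(1,t)=0$ for $t>0$; (PBC) $u(0,t)=u(1,t)$, $v(0,t)=v(1,t)$ for $t>0$ (with $c$ periodic). Mild solutions: define $\frac1C=\int_0^1\frac{dx}{c(x)}$, the change of variable $X(x)=C\int_0^x\frac{d\xi}{c(\xi)}\in[0,1]$ (a homeomorphism of $[0,1]$), $\beta(X)=C/c(x)$ where $X=X(x)$, and $U_0(X)=c(x)u_0(x)/C$, $V_0(X)=c(x)v_0(x)/C$. For functions $U,V$ set $R_{U,V}(X,t)=\frac{\alpha V(X,t)}{1+\beta(X)(U(X,t)+V(X,t))}$ and $R_{V,U}(X,t)=\frac{\alpha U(X,t)}{1+\beta(X)(U(X,t)+V(X,t))}$. For (PBC), $(U,V)\in\mathcal C(\mathbb T^1\times[0,\infty))^2$ (with $\mathbb T^1=[0,1]$ with endpoints identified, arguments taken mod 1) is required to satisfy $U(X,t)=U_0(X-Ct)e^{-t}+\int_0^t e^{s-t}R_{U,V}(X+C(s-t),s)\,ds$, $V(X,t)=V_0(X+Ct)e^{-t}+\int_0^t e^{s-t}R_{V,U}(X-C(s-t),s)\,ds$. For (DBC), $(U,V)\in\mathcal C([0,1]\times[0,\infty))^2$ is required to satisfy $U(X,t)=U_0(X-Ct)H(X-Ct)e^{-t}+\int_{(t-X/C)_+}^t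 e^{s-t}R_{U,V}(X+C(s-t),s)\,ds$, $V(X,t)=V_0(X+Ct)H(1-X-Ct)e^{-t}+\int_{(t-(1-X)/C)_+}^t e^{s-t}R_{V,U}(X-C(s-t),s)\,ds$, with $H$ the Heaviside function. In either case $(u(x,t),v(x,t))=\frac{C}{c(x)}(U(X(x),t),V(X(x),t))$ is called a global mild solution. *)

theory Defs
  imports "HOL-Analysis.Analysis"
begin

datatype bcond = DBC | PBC

definition Cc :: "(real \<Rightarrow> real) \<Rightarrow> real" where
  "Cc c = 1 / integral {0..1} (\<lambda>x. 1 / c x)"

definition Xmap :: "(real \<Rightarrow> real) \<Rightarrow> real \<Rightarrow> real" where
  "Xmap c x = Cc c * integral {0..x} (\<lambda>\<xi>. 1 / c \<xi>)"

definition Xinv :: "(real \<Rightarrow> real) \<Rightarrow> real \<Rightarrow> real" where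
  "Xinv c = inv_into {0..1} (Xmap c)"

definition beta :: "(real \<Rightarrow> real) \<Rightarrow> real \<Rightarrow> real" where
  "beta c X = Cc c / c (Xinv c X)"

definition init_tr :: "(real \<Rightarrow> real) \<Rightarrow> (real \<Rightarrow> real) \<Rightarrow> real \<Rightarrow> real" where
  "init_tr c u0 X = c (Xinv c X) * u0 (Xinv c X) / Cc c"

definition Rf :: "real \<Rightarrow> (real \<Rightarrow> real) \<Rightarrow> (real \<Rightarrow> real \<Rightarrow> real) \<Rightarrow> (real \<Rightarrow> real \<Rightarrow> real)
    \<Rightarrow> real \<Rightarrow> real \<Rightarrow> real" where
  "Rf \<alpha> c P Q X t = \<alpha> * Q X t / (1 + beta c X * (P X t + Q X t))"

definition compat :: "bcond \<Rightarrow> (real \<Rightarrow> real) \<Rightarrow> (real \<Rightarrow> real) \<Rightarrow> (real \<Rightarrow> real) \<Rightarrow> bool" where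
  "compat bc c u0 v0 = (case bc of
      DBC \<Rightarrow> u0 0 = 0 \<and> v0 1 = 0
    | PBC \<Rightarrow> u0 0 = u0 1 \<and> v0 0 = v0 1 \<and> c 0 = c 1)"

text \<open>(U,V) is a global mild solution (in the transformed variables X in [0,1], t >= 0).
  For PBC, continuity on the torus T^1 x [0,oo) is continuity on [0,1] x [0,oo) together
  with U(0,t) = U(1,t); arguments are taken mod 1 via frac.\<close>
definition mild_sol :: "bcond \<Rightarrow> real \<Rightarrow> (real \<Rightarrow> real) \<Rightarrow> (real \<Rightarrow> real) \<Rightarrow> (real \<Rightarrow> real)
    \<Rightarrow> (real \<Rightarrow> real \<Rightarrow> real) \<Rightarrow> (real \<Rightarrow> real \<Rightarrow> real) \<Rightarrow> bool" where
  "mild_sol bc \<alpha> c u0 v0 U V =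
    (let C = Cc c; U0 = init_tr c u0; V0 = init_tr c v0 in
     continuous_on ({0..1} \<times> {0..}) (\<lambda>(X, t). U X t) \<and>
     continuous_on ({0..1} \<times> {0..}) (\<lambda>(X, t). V X t) \<and>
     (case bc of
       PBC \<Rightarrow>
         (\<forall>t\<ge>0. U 0 t = U 1 t \<and> V 0 t = V 1 t) \<and>
         (\<forall>X\<in>{0..1}. \<forall>t\<ge>0.
            U X t = U0 (frac (X - C * t)) * exp (- t)
               + integral {0..t} (\<lambda>s. exp (s - t) * Rf \<alpha> c U V (frac (X + C * (s - t))) s) \<and>
            V X t = V0 (frac (X + C * t)) * exp (- t)
               + integral {0..t} (\<lambda>s. exp (s - t) * Rf \<alpha> c V U (frac (X - C * (s - t))) s))
     | DBC \<Rightarrow>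
         (\<forall>X\<in>{0..1}. \<forall>t\<ge>0.
            U X t = (if X - C * t \<ge> 0 then U0 (X - C * t) else 0) * exp (- t)
               + integral {max 0 (t - X / C)..t} (\<lambda>s. exp (s - t) * Rf \<alpha> c U V (X + C * (s - t)) s) \<and>
            V X t = (if 1 - X - C * t \<ge> 0 then V0 (X + C * t) else 0) * exp (- t)
               + integral {max 0 (t - (1 - X) / C)..t} (\<lambda>s. exp (s - t) * Rf \<alpha> c V U (X - C * (s - t)) s))))"

definition phys :: "(real \<Rightarrow> real) \<Rightarrow> (real \<Rightarrow> real \<Rightarrow> real) \<Rightarrow> real \<Rightarrow> real \<Rightarrow> real" where
  "phys c U x t = Cc c / c x * U (Xmap c x) t"

end

theory Submission
  imports Defs
begin

text \<open>
  Along the characteristics \<open>dX/dt = \<plusminus>C\<close> of the transformed system, a mild solution is a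
  fixed point of the Duhamel map: transported initial data plus the reaction integrated along the
  characteristic. Cutting the arguments of the reaction off at zero makes it bounded by
  \<open>\<alpha> * cu / C\<close> and Lipschitz with constant \<open>4 * \<alpha>\<close>. The truncated Duhamel map is then a
  contraction for the norm \<open>sup exp (- rate * t) * \<bar>W (X, t)\<bar>\<close>, and its values lie between
  \<open>0\<close> and \<open>cu / C * max (sup u0) \<alpha>\<close> (resp. \<open>v0\<close>), being convex combinations, with weight
  \<open>exp (- t)\<close>, of the transported data and an average of the reaction. So its fixed point is
  nonnegative and solves the untruncated system; returning to \<open>u = C / c x * U\<close> turns
  \<open>cu / C\<close> into \<open>cu / cl\<close>.
  A competing solution need not be nonnegative, so uniqueness is propagated forward in time: right
  after the last time the two solutions agree, the competitor stays above \<open>- slack\<close> by continuity,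
  the reaction is still Lipschitz there, and a Gronwall-type estimate on a short time strip shows
  that the difference vanishes.
\<close>


section \<open>Integrals and continuity\<close>

lemma integral_exp_shift:
  fixes a t :: real
  assumes "a \<le> t"
  shows "integral {a..t} (\<lambda>s. exp (s - t)) = 1 - exp (a - t)"
proof -
  have "((\<lambda>s. exp (s - t)) has_integral (exp (t - t) - exp (a - t))) {a..t}"
    by (rule fundamental_theorem_of_calculus[OF assms])
       (auto intro!: derivative_eq_intros simp flip: has_real_derivative_iff_has_vector_derivative)
  then show ?thesis by (simp add: integral_unique)
qed

lemma integral_exp_mult:
  fixes a t l :: real
  assumes "a \<le> t" "l \<noteq> 0"
  shows "integral {a..t} (\<lambda>s. exp (l * s)) = (exp (l * t) - exp (l * a)) / l"
proof -
  have "((\<lambda>s. exp (l * s)) has_integral (exp (l * t) / l - exp (l * a) / l)) {a..t}"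
    by (rule fundamental_theorem_of_calculus[OF assms(1)])
       (use assms(2) in \<open>auto intro!: derivative_eq_intros simp flip: has_real_derivative_iff_has_vector_derivative\<close>)
  then show ?thesis by (simp add: integral_unique diff_divide_distrib)
qed

lemma integral_rescale_unit_interval:
  fixes f :: "real \<Rightarrow> real"
  assumes "a \<le> b" "continuous_on {a..b} f"
  shows "integral {a..b} f = (b - a) * integral {0..1} (\<lambda>\<theta>. f ((b - a) * \<theta> + a))"
proof (cases "a = b")
  case False
  then have ba: "b - a > 0" using assms by simp
  have "(f has_integral integral {a..b} f) (cbox a b)"
    using integrable_continuous_interval[OF assms(2)] by (simp add: has_integral_integral)
  from has_integral_affinity'[OF this ba, of a]
  have "((\<lambda>x. f ((b - a) * x + a)) has_integral (integral {a..b} f / (b - a))) (cbox 0 1)"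
    using ba by (simp add: divide_inverse mult.commute)
  then show ?thesis using ba by (simp add: integral_unique)
qed simp

lemma continuous_on_integral_varying_bounds:
  fixes g :: "'a::topological_space \<Rightarrow> real \<Rightarrow> real"
  assumes lo: "continuous_on UNIV lo" and hi: "continuous_on UNIV hi" and le: "\<And>p. lo p \<le> hi p"
    and g: "continuous_on UNIV (\<lambda>(p, s). g p s)"
  shows "continuous_on UNIV (\<lambda>p. integral {lo p..hi p} (g p))"
proof -
  have "continuous_on S (g p)" for p S
    using continuous_on_compose2[OF g continuous_on_Pair[OF continuous_on_const continuous_on_id], of p S]
    by simp
  then have rescale: "integral {lo p..hi p} (g p)
      = (hi p - lo p) * integral {0..1} (\<lambda>\<theta>. g p ((hi p - lo p) * \<theta> + lo p))" for p
    by (intro integral_rescale_unit_interval le)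
  have bounds_cont: "continuous_on S (\<lambda>x. hi (f x))" "continuous_on S (\<lambda>x. lo (f x))"
    if "continuous_on S f" for S and f :: "'b::topological_space \<Rightarrow> 'a"
    by (intro continuous_on_compose2[OF hi that] continuous_on_compose2[OF lo that]; simp)+
  have "continuous_on (UNIV \<times> cbox 0 1) (\<lambda>(p, \<theta>). (p, (hi p - lo p) * \<theta> + lo p))"
    by (auto intro!: continuous_intros bounds_cont simp: split_beta)
  then have "continuous_on (UNIV \<times> cbox 0 1) (\<lambda>(p, \<theta>). g p ((hi p - lo p) * \<theta> + lo p))"
    using continuous_on_compose2[OF g] by (fastforce simp: split_beta)
  then have "continuous_on UNIV (\<lambda>p. (hi p - lo p) * integral (cbox 0 1) (\<lambda>\<theta>. g p ((hi p - lo p) * \<theta> + lo p)))"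
    by (intro continuous_intros lo hi integral_continuous_on_param)
  then show ?thesis by (simp add: rescale)
qed

lemma integral_bound_vanishing_before:
  fixes g :: "real \<Rightarrow> real"
  assumes g: "g integrable_on {l..t}" and "l \<le> t" "T \<le> t" "M \<ge> 0"
    and zero: "\<And>s. s \<in> {l..t} \<Longrightarrow> s \<le> T \<Longrightarrow> g s = 0"
    and bound: "\<And>s. s \<in> {l..t} \<Longrightarrow> T \<le> s \<Longrightarrow> \<bar>g s\<bar> \<le> M"
  shows "\<bar>integral {l..t} g\<bar> \<le> M * (t - T)"
proof (cases "T \<le> l")
  case True
  have "norm (integral {l..t} g) \<le> integral {l..t} (\<lambda>_. M)"
    by (rule integral_norm_bound_integral[OF g]) (use bound True in auto)
  also have "\<dots> = M * (t - l)" using assms by simp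
  also have "\<dots> \<le> M * (t - T)" using assms True by (intro mult_left_mono) auto
  finally show ?thesis by simp
next
  case False
  have gT: "g integrable_on {T..t}" by (rule integrable_subinterval_real[OF g]) (use False in auto)
  have "integral {l..t} g = integral {l..T} g + integral {T..t} g"
    by (rule Henstock_Kurzweil_Integration.integral_combine[symmetric]) (use assms False in auto)
  also have "integral {l..T} g = 0"
    using integral_cong[of "{l..T}" g "\<lambda>_. 0"] zero assms by auto
  finally have "\<bar>integral {l..t} g\<bar> = norm (integral {T..t} g)" by simp
  also have "\<dots> \<le> integral {T..t} (\<lambda>_. M)"
    by (rule integral_norm_bound_integral[OF gT]) (use bound False in auto)
  finally show ?thesis using assms by (simp add: mult.commute)
qed

lemma continuous_on_compose_pair:
  fixes G :: "'a::topological_space \<Rightarrow> 'b::topological_space \<Rightarrow> 'c::topological_space"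
  assumes "continuous_on UNIV (\<lambda>q. G (fst q) (snd q))" "continuous_on S f" "continuous_on S g"
  shows "continuous_on S (\<lambda>x. G (f x) (g x))"
  using continuous_on_compose2[OF assms(1) continuous_on_Pair[OF assms(2,3)]] by simp

definition char_integral :: "(real \<Rightarrow> real \<Rightarrow> real) \<Rightarrow> real \<Rightarrow> real \<Rightarrow> real \<Rightarrow> real \<Rightarrow> real" where
  "char_integral G k a x t = integral {a..t} (\<lambda>s. exp (s - t) * G (x + k * (s - t)) s)"

lemma integrable_char_integrand:
  fixes G :: "real \<Rightarrow> real \<Rightarrow> real"
  assumes "continuous_on UNIV (\<lambda>q. G (fst q) (snd q))"
  shows "(\<lambda>s. exp (s - t) * G (x + k * (s - t)) s) integrable_on {a..t}"
  by (intro integrable_continuous_interval continuous_intros continuous_on_compose_pair[OF assms])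

lemma continuous_on_char_integral:
  fixes a x t :: "'a::topological_space \<Rightarrow> real" and G :: "real \<Rightarrow> real \<Rightarrow> real"
  assumes G: "continuous_on UNIV (\<lambda>q. G (fst q) (snd q))" and a: "continuous_on UNIV a"
    and x: "continuous_on UNIV x" and t: "continuous_on UNIV t" and le: "\<And>p. a p \<le> t p"
  shows "continuous_on UNIV (\<lambda>p. char_integral G k (a p) (x p) (t p))"
  unfolding char_integral_def
proof (rule continuous_on_integral_varying_bounds[OF a t le])
  have "continuous_on UNIV (\<lambda>q. x (fst q))" "continuous_on UNIV (\<lambda>q. t (fst q))"
    by (auto intro!: continuous_on_compose2[OF x] continuous_on_compose2[OF t] continuous_intros)
  then have "continuous_on UNIV
      (\<lambda>q. exp (snd q - t (fst q)) * G (x (fst q) + k * (snd q - t (fst q))) (snd q))"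
    by (auto intro!: continuous_intros continuous_on_compose_pair[OF G])
  then show "continuous_on UNIV (\<lambda>(p, s). exp (s - t p) * G (x p + k * (s - t p)) s)"
    by (simp add: split_beta)
qed

lemma char_integral_bounds:
  fixes G :: "real \<Rightarrow> real \<Rightarrow> real"
  assumes G: "continuous_on UNIV (\<lambda>q. G (fst q) (snd q))" and G_bounds: "\<And>y s. 0 \<le> G y s \<and> G y s \<le> M"
    and "0 \<le> a" "a \<le> t"
  shows "0 \<le> char_integral G k a x t \<and> char_integral G k a x t \<le> M * (1 - exp (- t))"
proof
  show "0 \<le> char_integral G k a x t" unfolding char_integral_def
    by (rule integral_nonneg[OF integrable_char_integrand[OF G]]) (use G_bounds in auto)
  have "char_integral G k a x t \<le> integral {a..t} (\<lambda>s. M * exp (s - t))" unfolding char_integral_def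
    by (rule integral_le[OF integrable_char_integrand[OF G]])
       (auto intro!: integrable_continuous_interval continuous_intros simp: G_bounds mult.commute)
  also have "\<dots> = M * (1 - exp (a - t))" using integral_exp_shift[OF \<open>a \<le> t\<close>] by simp
  also have "\<dots> \<le> M * (1 - exp (- t))"
    using G_bounds[of 0 0] \<open>0 \<le> a\<close> by (intro mult_left_mono) auto
  finally show "char_integral G k a x t \<le> M * (1 - exp (- t))" .
qed

text \<open>For integrands growing at most like \<open>exp (l * s)\<close> the characteristic integral gains the
  factor \<open>1 / l\<close>; this is what makes the Duhamel map a contraction in a weighted norm.\<close>

lemma char_integral_diff:
  fixes G1 G2 :: "real \<Rightarrow> real \<Rightarrow> real"
  assumes G1: "continuous_on UNIV (\<lambda>q. G1 (fst q) (snd q))"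
    and G2: "continuous_on UNIV (\<lambda>q. G2 (fst q) (snd q))"
    and diff: "\<And>y s. s \<ge> 0 \<Longrightarrow> \<bar>G1 y s - G2 y s\<bar> \<le> K * exp (l * s)"
    and "0 \<le> a" "a \<le> t" "l > 0"
  shows "\<bar>char_integral G1 k a x t - char_integral G2 k a x t\<bar> \<le> K * exp (l * t) / l"
proof -
  let ?g1 = "\<lambda>s. exp (s - t) * G1 (x + k * (s - t)) s"
  let ?g2 = "\<lambda>s. exp (s - t) * G2 (x + k * (s - t)) s"
  have "\<bar>G1 0 0 - G2 0 0\<bar> \<le> K" using diff[of 0 0] by simp
  then have K: "K \<ge> 0" by (meson abs_ge_zero order_trans)
  have "\<bar>char_integral G1 k a x t - char_integral G2 k a x t\<bar> = norm (integral {a..t} (\<lambda>s. ?g1 s - ?g2 s))"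
    unfolding char_integral_def
    by (subst integral_diff) (auto intro: integrable_char_integrand[OF G1] integrable_char_integrand[OF G2])
  also have "\<dots> \<le> integral {a..t} (\<lambda>s. K * exp (l * s))"
  proof (rule integral_norm_bound_integral)
    show "(\<lambda>s. ?g1 s - ?g2 s) integrable_on {a..t}"
      by (intro integrable_diff integrable_char_integrand G1 G2)
    show "(\<lambda>s. K * exp (l * s)) integrable_on {a..t}"
      by (auto intro!: integrable_continuous_interval continuous_intros)
    fix s assume s: "s \<in> {a..t}"
    have "norm (?g1 s - ?g2 s) = exp (s - t) * \<bar>G1 (x + k * (s - t)) s - G2 (x + k * (s - t)) s\<bar>"
      by (simp add: right_diff_distrib[symmetric] abs_mult)
    also have "\<dots> \<le> 1 * (K * exp (l * s))"
      using s diff[of s "x + k * (s - t)"] \<open>0 \<le> a\<close> by (intro mult_mono) auto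
    finally show "norm (?g1 s - ?g2 s) \<le> K * exp (l * s)" by simp
  qed
  also have "\<dots> = K * ((exp (l * t) - exp (l * a)) / l)"
    using integral_exp_mult[OF \<open>a \<le> t\<close>, of l] \<open>l > 0\<close> by simp
  also have "\<dots> \<le> K * (exp (l * t) / l)"
    using K \<open>l > 0\<close> by (intro mult_left_mono divide_right_mono) auto
  finally show ?thesis by simp
qed

lemma continuous_on_compose_frac_cell:
  fixes f :: "real \<Rightarrow> real \<Rightarrow> real" and n :: int
  assumes f: "continuous_on ({0..1} \<times> T) (\<lambda>(y, s). f y s)" and per: "\<forall>s\<in>T. f 0 s = f 1 s"
  shows "continuous_on ({of_int n..of_int n + 1} \<times> T) (\<lambda>(y, s). f (frac y) s)"
proof -
  have "continuous_on ({of_int n..of_int n + 1} \<times> T)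
      ((\<lambda>(y, s). f y s) \<circ> (\<lambda>(y, s). (y - of_int n, s)))"
    by (rule continuous_on_compose[OF _ continuous_on_subset[OF f]])
       (auto intro!: continuous_intros simp: split_beta)
  then have shifted: "continuous_on ({of_int n..of_int n + 1} \<times> T) (\<lambda>(y, s). f (y - of_int n) s)"
    by (simp add: o_def split_beta)
  have "f (frac y) s = f (y - of_int n) s" if "y \<in> {of_int n..of_int n + 1}" "s \<in> T" for y s
  proof (cases "y = of_int n + 1")
    case True
    then show ?thesis using per that by (simp add: frac_def)
  next
    case False
    then have "frac y = y - of_int n"
      using that by (subst frac_unique_iff) auto
    then show ?thesis by simp
  qed
  then show ?thesis
    by (intro continuous_on_eq[OF shifted]) auto
qed

lemma continuous_on_compose_frac2:
  fixes f :: "real \<Rightarrow> real \<Rightarrow> real"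
  assumes f: "continuous_on ({0..1} \<times> T) (\<lambda>(y, s). f y s)" and per: "\<forall>s\<in>T. f 0 s = f 1 s"
    and T: "closed T"
  shows "continuous_on (UNIV \<times> T) (\<lambda>(y, s). f (frac y) s)"
proof (rule continuous_on_eq_continuous_within[THEN iffD2], intro ballI)
  fix p :: "real \<times> real" assume p: "p \<in> UNIV \<times> T"
  define n where "n = \<lfloor>fst p\<rfloor>"
  define N where "N = {of_int (n - 1)..of_int n + 1 :: real} \<times> T"
  have "N = ({of_int (n - 1)..of_int (n - 1) + 1} \<times> T) \<union> ({of_int n..of_int n + 1} \<times> T)"
    unfolding N_def by auto
  then have "continuous_on N (\<lambda>(y, s). f (frac y) s)"
    by (metis continuous_on_closed_Un continuous_on_compose_frac_cell[OF f per] closed_Times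
        closed_atLeastAtMost T)
  moreover have "p \<in> N" using p unfolding N_def n_def by (auto, linarith+)
  moreover have "at p within (UNIV \<times> T) = at p within N"
  proof (rule at_within_nhd[where S="{of_int (n - 1)<..<of_int n + 1} \<times> UNIV"])
    show "p \<in> {of_int (n - 1)<..<of_int n + 1} \<times> UNIV"
      unfolding n_def by (cases p) (simp, linarith)
    show "UNIV \<times> T \<inter> ({of_int (n - 1)<..<of_int n + 1} \<times> UNIV) - {p}
        = N \<inter> ({of_int (n - 1)<..<of_int n + 1} \<times> UNIV) - {p}"
      unfolding N_def by auto
  qed (auto intro!: open_Times)
  ultimately show "continuous (at p within UNIV \<times> T) (\<lambda>(y, s). f (frac y) s)"
    by (simp add: continuous_on_eq_continuous_within)
qed

lemma continuous_on_compose_frac: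
  fixes f :: "real \<Rightarrow> real"
  assumes "continuous_on {0..1} f" "f 0 = f 1"
  shows "continuous_on UNIV (\<lambda>y. f (frac y))"
proof -
  have "continuous_on ({0..1} \<times> UNIV) (\<lambda>p :: real \<times> real. f (fst p))"
    by (rule continuous_on_compose2[OF assms(1) continuous_on_fst]) auto
  then have "continuous_on ({0..1} \<times> UNIV) (\<lambda>(y, s::real). f y)"
    by (simp add: split_beta)
  then have "continuous_on (UNIV \<times> UNIV) (\<lambda>(y, s::real). f (frac y))"
    using continuous_on_compose_frac2[of UNIV "\<lambda>y s. f y"] assms(2) by simp
  from continuous_on_compose2[OF this continuous_on_Pair[OF continuous_on_id continuous_on_const]]
  show ?thesis by simp
qed

lemma frac_in_unit: "frac y \<in> {0..1}"
  using frac_lt_1[of y] by auto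

definition clamp01 :: "real \<Rightarrow> real" where
  "clamp01 x = max 0 (min 1 x)"

lemma clamp01_in_unit: "clamp01 x \<in> {0..1}"
  by (auto simp: clamp01_def)

lemma clamp01_id: "x \<in> {0..1} \<Longrightarrow> clamp01 x = x"
  by (auto simp: clamp01_def)

lemma continuous_on_clamp01[continuous_intros]:
  "continuous_on S f \<Longrightarrow> continuous_on S (\<lambda>x. clamp01 (f x))"
  unfolding clamp01_def by (intro continuous_intros)

lemma continuous_on_eval_bcontfun:
  "continuous_on UNIV (\<lambda>Z :: 'a::topological_space \<Rightarrow>\<^sub>C 'b::metric_space. apply_bcontfun Z q)"
  unfolding continuous_on_iff
  by (metis dist_fun_lt_imp_dist_val_lt)

lemma uniformly_continuous_in_time:
  fixes W :: "real \<Rightarrow> real \<Rightarrow> real"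
  assumes cont: "continuous_on ({0..1} \<times> {0..}) (\<lambda>(X, t). W X t)" and "T \<ge> 0" "e > 0"
  obtains d where "d > 0"
    "\<And>X s. X \<in> {0..1} \<Longrightarrow> T \<le> s \<Longrightarrow> s \<le> T + 1 \<Longrightarrow> s - T < d \<Longrightarrow> \<bar>W X s - W X T\<bar> < e"
proof -
  define K where "K = {0..1::real} \<times> {T..T + 1}"
  have "uniformly_continuous_on K (\<lambda>(X, t). W X t)"
    by (rule compact_uniformly_continuous[OF continuous_on_subset[OF cont]])
       (use assms in \<open>auto simp: K_def intro!: compact_Times\<close>)
  then obtain d where "d > 0" and d: "\<And>p p'. p \<in> K \<Longrightarrow> p' \<in> K \<Longrightarrow> dist p' p < d
      \<Longrightarrow> dist ((\<lambda>(X, t). W X t) p') ((\<lambda>(X, t). W X t) p) < e"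
    unfolding uniformly_continuous_on_def using \<open>e > 0\<close> by metis
  show ?thesis
  proof (rule that[OF \<open>d > 0\<close>])
    fix X s :: real assume "X \<in> {0..1}" "T \<le> s" "s \<le> T + 1" "s - T < d"
    then show "\<bar>W X s - W X T\<bar> < e"
      using d[of "(X, T)" "(X, s)"] by (auto simp: K_def dist_Pair_Pair dist_real_def)
  qed
qed

lemma zero_if_le_half_of_bounds:
  fixes f :: "'a::topological_space \<Rightarrow> real"
  assumes "compact K" "continuous_on K f" and nonneg: "\<And>p. p \<in> K \<Longrightarrow> 0 \<le> f p"
    and half: "\<And>D. (\<And>p. p \<in> K \<Longrightarrow> f p \<le> D) \<Longrightarrow> 0 \<le> D \<Longrightarrow> (\<And>p. p \<in> K \<Longrightarrow> f p \<le> D / 2)"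
    and p: "p \<in> K"
  shows "f p = 0"
proof -
  define D where "D = Sup (f ` K)"
  have bdd: "bdd_above (f ` K)"
    using assms by (intro bounded_imp_bdd_above compact_imp_bounded compact_continuous_image)
  have le_D: "f q \<le> D" if "q \<in> K" for q
    unfolding D_def using bdd that by (intro cSup_upper) auto
  have "0 \<le> D" using nonneg[OF p] le_D[OF p] by linarith
  then have "D \<le> D / 2"
    unfolding D_def using p half[OF le_D] by (intro cSup_least) (auto simp: D_def)
  then show ?thesis using nonneg[OF p] le_D[OF p] by linarith
qed

lemma convex_combination_bounds:
  fixes A I M e :: real
  assumes "0 \<le> A" "A \<le> M" "0 \<le> I" "I \<le> M * (1 - e)" "0 \<le> e"
  shows "0 \<le> A * e + I \<and> A * e + I \<le> M"
proof -
  have "A * e \<le> M * e" using assms by (intro mult_right_mono)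
  then show ?thesis using assms by (simp add: algebra_simps)
qed

lemma ratio_saturation_lipschitz:
  fixes \<beta> a b a' b' \<delta> :: real
  assumes "\<beta> \<ge> 0" "a \<ge> 0" "b \<ge> 0" "a' \<ge> -\<delta>" "b' \<ge> -\<delta>" "4 * \<beta> * \<delta> \<le> 1"
  shows "\<bar>b / (1 + \<beta> * (a + b)) - b' / (1 + \<beta> * (a' + b'))\<bar> \<le> 4 * (\<bar>a - a'\<bar> + \<bar>b - b'\<bar>)"
proof -
  define D D' E where "D = 1 + \<beta> * (a + b)" and "D' = 1 + \<beta> * (a' + b')"
    and "E = \<bar>a - a'\<bar> + \<bar>b - b'\<bar>"
  have D: "D \<ge> 1" "b * \<beta> \<le> D" unfolding D_def using assms by (simp_all add: algebra_simps)
  have "\<beta> * (a' + b') \<ge> \<beta> * (-2 * \<delta>)" using assms by (intro mult_left_mono) auto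
  then have D': "D' \<ge> 1/2" unfolding D'_def using assms by linarith
  \<comment> \<open>\<open>D'\<close> may be smaller than \<open>1\<close>; the bound \<open>D' \<ge> 1/2\<close> costs a factor \<open>2\<close>\<close>
  have half: "Y / D' \<le> 2 * Y" if "Y \<ge> 0" for Y
  proof -
    have "Y / D' \<le> Y / (1/2)" using D' that by (intro divide_left_mono) auto
    then show ?thesis by simp
  qed
  have "D' - D = \<beta> * ((a' - a) + (b' - b))"
    unfolding D_def D'_def by (simp add: algebra_simps)
  then have "\<bar>D' - D\<bar> = \<beta> * \<bar>(a' - a) + (b' - b)\<bar>"
    using assms by (simp add: abs_mult)
  also have "\<dots> \<le> \<beta> * E" unfolding E_def using assms by (intro mult_left_mono) auto
  finally have "b * \<bar>D' - D\<bar> \<le> (b * \<beta>) * E"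
    using mult_left_mono[OF _ \<open>b \<ge> 0\<close>] by (metis mult.assoc)
  also have "\<dots> \<le> D * E" using D by (intro mult_right_mono) (auto simp: E_def)
  finally have "b * \<bar>D' - D\<bar> \<le> D * E" .
  have "\<bar>b * (D' - D) / (D * D')\<bar> = b * \<bar>D' - D\<bar> / (D * D')"
    using D D' assms by (simp add: abs_divide abs_mult)
  also have "\<dots> \<le> D * E / (D * D')"
    using D D' \<open>b * \<bar>D' - D\<bar> \<le> D * E\<close> by (intro divide_right_mono) auto
  also have "\<dots> = E / D'" using D by simp
  also have "\<dots> \<le> 2 * E" by (rule half) (simp add: E_def)
  finally have first: "\<bar>b * (D' - D) / (D * D')\<bar> \<le> 2 * E" .
  have second: "\<bar>(b - b') / D'\<bar> \<le> 2 * \<bar>b - b'\<bar>"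
    using D' half[of "\<bar>b - b'\<bar>"] by (simp add: abs_divide)
  have "b / D - b' / D' = b * (D' - D) / (D * D') + (b - b') / D'"
    using D D' by (simp add: field_simps)
  then have "\<bar>b / D - b' / D'\<bar> \<le> \<bar>b * (D' - D) / (D * D')\<bar> + \<bar>(b - b') / D'\<bar>"
    by (simp only: abs_triangle_ineq)
  also have "\<dots> \<le> 2 * E + 2 * \<bar>b - b'\<bar>" using first second by (rule add_mono)
  also have "\<dots> \<le> 4 * E" by (simp add: E_def)
  finally show ?thesis unfolding D_def D'_def E_def .
qed

lemma saturation_lipschitz:
  fixes \<alpha> \<beta> a b a' b' \<delta> :: real
  assumes "\<alpha> \<ge> 0" "\<beta> \<ge> 0" "a \<ge> 0" "b \<ge> 0" "a' \<ge> -\<delta>" "b' \<ge> -\<delta>" "4 * \<beta> * \<delta> \<le> 1"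
  shows "\<bar>\<alpha> * b / (1 + \<beta> * (a + b)) - \<alpha> * b' / (1 + \<beta> * (a' + b'))\<bar>
      \<le> 4 * \<alpha> * (\<bar>a - a'\<bar> + \<bar>b - b'\<bar>)"
proof -
  have "\<alpha> * b / D - \<alpha> * b' / D' = \<alpha> * (b / D - b' / D')" for D D' :: real
    by (simp add: right_diff_distrib)
  then show ?thesis
    using mult_left_mono[OF ratio_saturation_lipschitz[OF assms(2-7)] assms(1)] assms(1)
    by (simp add: abs_mult mult.assoc mult.left_commute)
qed

section \<open>The characteristic change of variables\<close>

locale speed_bounds =
  fixes c :: "real \<Rightarrow> real" and cl cu :: real
  assumes continuous_c: "continuous_on {0..1} c" and cl_pos: "0 < cl"
    and c_bounds: "\<And>x. x \<in> {0..1} \<Longrightarrow> cl \<le> c x \<and> c x \<le> cu"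
begin

lemma c_pos: "x \<in> {0..1} \<Longrightarrow> c x > 0"
  using c_bounds cl_pos by force

lemma cl_le_cu: "cl \<le> cu"
  using c_bounds[of 0] by auto

lemma cu_pos: "cu > 0"
  using cl_pos cl_le_cu by simp

lemma continuous_on_inverse_c: "continuous_on {0..1} (\<lambda>x. 1 / c x)"
  by (intro continuous_intros continuous_c) (metis atLeastAtMost_iff c_pos less_irrefl)

lemma integrable_inverse_c: "0 \<le> a \<Longrightarrow> b \<le> 1 \<Longrightarrow> (\<lambda>x. 1 / c x) integrable_on {a..b}"
  by (intro integrable_continuous_interval continuous_on_subset[OF continuous_on_inverse_c]) auto

lemma integral_inverse_c_bounds:
  assumes "0 \<le> a" "a \<le> b" "b \<le> 1"
  shows "(b - a) / cu \<le> integral {a..b} (\<lambda>x. 1 / c x)" "integral {a..b} (\<lambda>x. 1 / c x) \<le> (b - a) / cl"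
proof -
  have "integral {a..b} (\<lambda>x. 1 / cu) \<le> integral {a..b} (\<lambda>x. 1 / c x)"
    using assms integrable_inverse_c[of a b] c_bounds c_pos cu_pos
    by (intro integral_le) (auto intro!: divide_left_mono mult_pos_pos)
  then show "(b - a) / cu \<le> integral {a..b} (\<lambda>x. 1 / c x)" using assms by simp
  have "integral {a..b} (\<lambda>x. 1 / c x) \<le> integral {a..b} (\<lambda>x. 1 / cl)"
    using assms integrable_inverse_c[of a b] c_bounds c_pos cl_pos
    by (intro integral_le) (auto intro!: divide_left_mono mult_pos_pos)
  then show "integral {a..b} (\<lambda>x. 1 / c x) \<le> (b - a) / cl" using assms by simp
qed

definition C :: real where "C = Cc c"

lemma C_bounds: "cl \<le> C" "C \<le> cu"
proof -
  have lower: "1 / cu \<le> integral {0..1} (\<lambda>x. 1 / c x)"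
    and upper: "integral {0..1} (\<lambda>x. 1 / c x) \<le> 1 / cl"
    using integral_inverse_c_bounds[of 0 1] by simp_all
  then have "integral {0..1} (\<lambda>x. 1 / c x) > 0"
    using cu_pos by (metis divide_pos_pos order_less_le_trans zero_less_one)
  then show "cl \<le> C" "C \<le> cu"
    unfolding C_def Cc_def using lower upper cl_pos cu_pos
    by (simp_all add: pos_le_divide_eq pos_divide_le_eq mult.commute)
qed

lemma C_pos: "C > 0"
  using C_bounds cl_pos by simp

lemma Xmap_eq: "Xmap c x = C * integral {0..x} (\<lambda>\<xi>. 1 / c \<xi>)"
  unfolding Xmap_def C_def ..

lemma Xmap_0: "Xmap c 0 = 0"
  by (simp add: Xmap_eq)

lemma Xmap_1: "Xmap c 1 = 1"
  using C_pos by (simp add: Xmap_eq C_def Cc_def)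

lemma continuous_on_Xmap: "continuous_on {0..1} (Xmap c)"
  unfolding Xmap_eq
  by (intro continuous_intros indefinite_integral_continuous_1 integrable_inverse_c) auto

lemma Xmap_strict_mono: 
  assumes "0 \<le> x" "x < y" "y \<le> 1"
  shows "Xmap c x < Xmap c y"
proof -
  have "integral {0..x} (\<lambda>\<xi>. 1 / c \<xi>) + integral {x..y} (\<lambda>\<xi>. 1 / c \<xi>) = integral {0..y} (\<lambda>\<xi>. 1 / c \<xi>)"
    using assms integrable_inverse_c[of 0 y] by (intro Henstock_Kurzweil_Integration.integral_combine) auto
  moreover have "0 < (y - x) / cu" "(y - x) / cu \<le> integral {x..y} (\<lambda>\<xi>. 1 / c \<xi>)"
    using assms cu_pos integral_inverse_c_bounds(1)[of x y] by auto
  ultimately show ?thesis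
    unfolding Xmap_eq using C_pos by (smt (verit) mult_strict_left_mono)
qed

lemma Xmap_in_unit: "x \<in> {0..1} \<Longrightarrow> Xmap c x \<in> {0..1}"
  using Xmap_strict_mono[of 0 x] Xmap_strict_mono[of x 1] Xmap_0 Xmap_1
  by (cases "x = 0"; cases "x = 1") auto

lemma bij_betw_Xmap: "bij_betw (Xmap c) {0..1} {0..1}"
proof (rule bij_betw_imageI)
  show "inj_on (Xmap c) {0..1}"
    by (rule inj_onI) (metis Xmap_strict_mono atLeastAtMost_iff linorder_neqE_linordered_idom order_less_irrefl)
  have "X \<in> Xmap c ` {0..1}" if "X \<in> {0..1}" for X
    using IVT'[of "Xmap c" 0 X 1] that Xmap_0 Xmap_1 continuous_on_Xmap by force
  then show "Xmap c ` {0..1} = {0..1}"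
    using Xmap_in_unit by auto
qed

lemma Xinv_in_unit: "X \<in> {0..1} \<Longrightarrow> Xinv c X \<in> {0..1}"
  unfolding Xinv_def by (metis bij_betw_Xmap bij_betw_def inv_into_into)

lemma Xinv_Xmap: "x \<in> {0..1} \<Longrightarrow> Xinv c (Xmap c x) = x"
  unfolding Xinv_def by (metis bij_betw_Xmap bij_betw_def inv_into_f_f)

lemma Xinv_0: "Xinv c 0 = 0"
  using Xinv_Xmap[of 0] Xmap_0 by simp

lemma Xinv_1: "Xinv c 1 = 1"
  using Xinv_Xmap[of 1] Xmap_1 by simp

lemma continuous_on_Xinv: "continuous_on {0..1} (Xinv c)"
  using continuous_on_inv[OF continuous_on_Xmap compact_Icc, of "Xinv c"] Xinv_Xmap bij_betw_Xmap
  by (auto simp: bij_betw_def)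

lemma continuous_on_compose_Xinv:
  "continuous_on {0..1} f \<Longrightarrow> continuous_on {0..1} (\<lambda>X. f (Xinv c X))"
  using Xinv_in_unit by (intro continuous_on_compose2[OF _ continuous_on_Xinv]) auto

lemma beta_bounds: "X \<in> {0..1} \<Longrightarrow> C / cu \<le> beta c X \<and> beta c X \<le> C / cl"
  unfolding beta_def C_def[symmetric]
  using c_bounds[OF Xinv_in_unit] c_pos[OF Xinv_in_unit] C_pos cl_pos cu_pos
  by (auto intro!: divide_left_mono mult_pos_pos)

lemma beta_pos: "X \<in> {0..1} \<Longrightarrow> beta c X > 0"
  using beta_bounds[of X] divide_pos_pos[OF C_pos cu_pos] by linarith

lemma continuous_on_beta: "continuous_on {0..1} (beta c)"
  unfolding beta_def
  by (intro continuous_intros continuous_on_compose_Xinv continuous_c)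
     (metis c_pos Xinv_in_unit less_irrefl)

lemma continuous_on_init_tr:
  assumes "continuous_on {0..1} f"
  shows "continuous_on {0..1} (init_tr c f)"
proof -
  have "continuous_on {0..1} (\<lambda>X. c (Xinv c X) * f (Xinv c X))"
    by (intro continuous_intros continuous_on_compose_Xinv continuous_c assms)
  then show ?thesis
    unfolding init_tr_def C_def[symmetric] using C_pos by (intro continuous_on_divide) auto
qed

lemma init_tr_bounds:
  assumes f: "\<And>x. x \<in> {0..1} \<Longrightarrow> 0 \<le> f x \<and> f x \<le> M" and X: "X \<in> {0..1}"
  shows "0 \<le> init_tr c f X \<and> init_tr c f X \<le> cu * M / C"
proof -
  have x: "Xinv c X \<in> {0..1}" by (rule Xinv_in_unit[OF X])
  have "0 \<le> c (Xinv c X) * f (Xinv c X)" "c (Xinv c X) * f (Xinv c X) \<le> cu * M"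
    using f[OF x] c_bounds[OF x] c_pos[OF x] by (auto intro!: mult_mono)
  then show ?thesis
    unfolding init_tr_def C_def[symmetric] using C_pos by (auto intro!: divide_right_mono)
qed

end

section \<open>The truncated Duhamel map\<close>

locale transport_problem = speed_bounds +
  fixes bc :: bcond and \<alpha> :: real and u0 v0 :: "real \<Rightarrow> real"
  assumes alpha_nonneg: "\<alpha> \<ge> 0"
    and continuous_u0: "continuous_on {0..1} u0" and continuous_v0: "continuous_on {0..1} v0"
    and data_nonneg: "\<And>x. x \<in> {0..1} \<Longrightarrow> u0 x \<ge> 0 \<and> v0 x \<ge> 0"
    and compat: "compat bc c u0 v0"
begin

definition U0 :: "real \<Rightarrow> real" where "U0 = init_tr c u0"

definition V0 :: "real \<Rightarrow> real" where "V0 = init_tr c v0"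

lemma continuous_U0: "continuous_on {0..1} U0" and continuous_V0: "continuous_on {0..1} V0"
  unfolding U0_def V0_def using continuous_u0 continuous_v0 by (simp_all add: continuous_on_init_tr)

lemma boundary_values:
  "bc = PBC \<Longrightarrow> U0 0 = U0 1 \<and> V0 0 = V0 1 \<and> beta c 0 = beta c 1"
  "bc = DBC \<Longrightarrow> U0 0 = 0 \<and> V0 1 = 0"
  using compat by (simp_all add: compat_def U0_def V0_def init_tr_def beta_def Xinv_0 Xinv_1)

definition bound :: "(real \<Rightarrow> real) \<Rightarrow> real" where
  "bound f = cu / C * max (Sup (f ` {0..1})) \<alpha>"

lemma bound_ge: "\<alpha> * cu / C \<le> bound f" "0 \<le> bound f"
  unfolding bound_def using C_pos cu_pos alpha_nonneg
  by (auto simp: mult.commute[of \<alpha>] intro!: divide_right_mono mult_left_mono)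

lemma init_tr_le_bound:
  assumes f: "continuous_on {0..1} f" "\<And>x. x \<in> {0..1} \<Longrightarrow> f x \<ge> 0" and X: "X \<in> {0..1}"
  shows "0 \<le> init_tr c f X \<and> init_tr c f X \<le> bound f"
proof -
  have "f x \<le> Sup (f ` {0..1})" if "x \<in> {0..1}" for x
    using that f(1) by (intro cSup_upper bounded_imp_bdd_above compact_imp_bounded compact_continuous_image) auto
  then have "0 \<le> init_tr c f X \<and> init_tr c f X \<le> cu * Sup (f ` {0..1}) / C"
    using f(2) X by (intro init_tr_bounds) auto
  moreover have "cu * Sup (f ` {0..1}) / C \<le> bound f"
    unfolding bound_def using C_pos cu_pos by (auto intro!: divide_right_mono mult_left_mono)
  ultimately show ?thesis by linarith
qed

lemma U0_bounds: "X \<in> {0..1} \<Longrightarrow> 0 \<le> U0 X \<and> U0 X \<le> bound u0"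
  unfolding U0_def using init_tr_le_bound[OF continuous_u0] data_nonneg by blast

lemma V0_bounds: "X \<in> {0..1} \<Longrightarrow> 0 \<le> V0 X \<and> V0 X \<le> bound v0"
  unfolding V0_def using init_tr_le_bound[OF continuous_v0] data_nonneg by blast

text \<open>Points of the line are brought back to \<open>[0, 1]\<close>: periodically for (PBC), by clamping for
  (DBC). Composed with the data this gives their extensions to the whole line.\<close>

definition wrap :: "real \<Rightarrow> real" where
  "wrap y = (if bc = PBC then frac y else clamp01 y)"

lemma wrap_in_unit: "wrap y \<in> {0..1}"
  unfolding wrap_def using frac_in_unit clamp01_in_unit by auto

lemma wrap_DBC: "bc = DBC \<Longrightarrow> y \<in> {0..1} \<Longrightarrow> wrap y = y"
  unfolding wrap_def by (simp add: clamp01_id)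

lemma wrap_periodic: "bc = PBC \<Longrightarrow> wrap (y + 1) = wrap y"
  unfolding wrap_def by (simp add: frac_1_eq)

lemma continuous_on_compose_wrap:
  fixes f :: "real \<Rightarrow> real"
  assumes "continuous_on {0..1} f" "bc = PBC \<Longrightarrow> f 0 = f 1"
  shows "continuous_on UNIV (\<lambda>y. f (wrap y))"
proof (cases bc)
  case PBC
  then show ?thesis
    using continuous_on_compose_frac[OF assms(1) assms(2)[OF PBC]] unfolding wrap_def by simp
next
  case DBC
  then show ?thesis
    using clamp01_in_unit unfolding wrap_def
    by (auto intro!: continuous_on_compose2[OF assms(1)] continuous_intros)
qed

lemma continuous_on_beta_wrap[continuous_intros]:
  "continuous_on S g \<Longrightarrow> continuous_on S (\<lambda>x. beta c (wrap (g x)))"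
  using continuous_on_compose_wrap[OF continuous_on_beta] boundary_values(1)
  by (auto intro: continuous_on_compose2)

lemma continuous_on_U0_wrap[continuous_intros]:
  "continuous_on S g \<Longrightarrow> continuous_on S (\<lambda>x. U0 (wrap (g x)))"
  using continuous_on_compose_wrap[OF continuous_U0] boundary_values(1)
  by (auto intro: continuous_on_compose2)

lemma continuous_on_V0_wrap[continuous_intros]:
  "continuous_on S g \<Longrightarrow> continuous_on S (\<lambda>x. V0 (wrap (g x)))"
  using continuous_on_compose_wrap[OF continuous_V0] boundary_values(1)
  by (auto intro: continuous_on_compose2)

text \<open>The lower limits of the time integrals in \<open>mild_sol\<close>: for (DBC), the time at which the
  characteristic through \<open>(X, t)\<close> entered through the inflow boundary.\<close>

definition entry_U :: "real \<Rightarrow> real \<Rightarrow> real" where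
  "entry_U X t = (if bc = PBC then 0 else max 0 (t - X / C))"

definition entry_V :: "real \<Rightarrow> real \<Rightarrow> real" where
  "entry_V X t = (if bc = PBC then 0 else max 0 (t - (1 - X) / C))"

definition dbc_clamp :: "real \<Rightarrow> real" where
  "dbc_clamp X = (if bc = PBC then X else clamp01 X)"

lemma dbc_clamp_cases: "bc = PBC \<or> dbc_clamp X \<in> {0..1}"
  unfolding dbc_clamp_def using clamp01_in_unit by auto

lemma dbc_clamp_id: "X \<in> {0..1} \<Longrightarrow> dbc_clamp X = X"
  unfolding dbc_clamp_def by (simp add: clamp01_id)

lemma continuous_on_dbc_clamp[continuous_intros]:
  "continuous_on S f \<Longrightarrow> continuous_on S (\<lambda>x. dbc_clamp (f x))"
  unfolding dbc_clamp_def by (cases "bc = PBC") (auto intro!: continuous_intros)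

lemma entry_bounds:
  assumes "bc = PBC \<or> X \<in> {0..1}" "t \<ge> 0"
  shows "0 \<le> entry_U X t \<and> entry_U X t \<le> t" "0 \<le> entry_V X t \<and> entry_V X t \<le> t"
proof -
  have "bc = PBC \<or> 0 \<le> X / C \<and> 0 \<le> (1 - X) / C" using assms(1) C_pos by auto
  then show "0 \<le> entry_U X t \<and> entry_U X t \<le> t" "0 \<le> entry_V X t \<and> entry_V X t \<le> t"
    unfolding entry_U_def entry_V_def using assms(2) by auto
qed

lemma continuous_on_entry:
  "continuous_on UNIV (\<lambda>p. entry_U (dbc_clamp (fst p)) (max 0 (snd p)))"
  "continuous_on UNIV (\<lambda>p. entry_V (dbc_clamp (fst p)) (max 0 (snd p)))"
proof -
  have "continuous_on UNIV (\<lambda>p. entry_U (dbc_clamp (fst p)) (max 0 (snd p)))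
      \<and> continuous_on UNIV (\<lambda>p. entry_V (dbc_clamp (fst p)) (max 0 (snd p)))"
  proof (cases "bc = PBC")
    case False
    then show ?thesis
      unfolding entry_U_def entry_V_def dbc_clamp_def using C_pos by (auto intro!: continuous_intros)
  qed (unfold entry_U_def entry_V_def, simp)
  then show "continuous_on UNIV (\<lambda>p. entry_U (dbc_clamp (fst p)) (max 0 (snd p)))"
    "continuous_on UNIV (\<lambda>p. entry_V (dbc_clamp (fst p)) (max 0 (snd p)))" by auto
qed

lemma characteristic_in_unit:
  assumes "bc = DBC" "X \<in> {0..1}"
  shows "s \<in> {entry_U X t..t} \<Longrightarrow> X + C * (s - t) \<in> {0..1}"
    and "s \<in> {entry_V X t..t} \<Longrightarrow> X - C * (s - t) \<in> {0..1}"
proof -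
  assume "s \<in> {entry_U X t..t}"
  then have "t - X / C \<le> s" "s \<le> t" using assms unfolding entry_U_def by auto
  moreover have "C * (t - X / C) = C * t - X" using C_pos by (simp add: field_simps)
  ultimately have "C * t - X \<le> C * s" "C * s \<le> C * t"
    using C_pos mult_left_mono[of "t - X / C" s C] by auto
  then show "X + C * (s - t) \<in> {0..1}" using assms by (auto simp: algebra_simps)
next
  assume "s \<in> {entry_V X t..t}"
  then have "t - (1 - X) / C \<le> s" "s \<le> t" using assms unfolding entry_V_def by auto
  moreover have "C * (t - (1 - X) / C) = C * t - (1 - X)" using C_pos by (simp add: field_simps)
  ultimately have "C * t - (1 - X) \<le> C * s" "C * s \<le> C * t"
    using C_pos mult_left_mono[of "t - (1 - X) / C" s C] by auto
  then show "X - C * (s - t) \<in> {0..1}" using assms by (auto simp: algebra_simps)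
qed

lemma DBC_initial_terms:
  assumes "bc = DBC" "X \<in> {0..1}" "t \<ge> 0"
  shows "(if X - C * t \<ge> 0 then U0 (X - C * t) else 0) = U0 (wrap (X - C * t))"
    and "(if 1 - X - C * t \<ge> 0 then V0 (X + C * t) else 0) = V0 (wrap (X + C * t))"
proof -
  have "C * t \<ge> 0" using C_pos assms(3) by simp
  then show "(if X - C * t \<ge> 0 then U0 (X - C * t) else 0) = U0 (wrap (X - C * t))"
    "(if 1 - X - C * t \<ge> 0 then V0 (X + C * t) else 0) = V0 (wrap (X + C * t))"
    using assms boundary_values(2) unfolding wrap_def clamp01_def by auto
qed

lemma DBC_integral_terms:
  assumes "bc = DBC" "X \<in> {0..1}"
  shows "integral {max 0 (t - X / C)..t} (\<lambda>s. exp (s - t) * Rf \<alpha> c U V (X + C * (s - t)) s)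
      = integral {entry_U X t..t} (\<lambda>s. exp (s - t) * Rf \<alpha> c U V (wrap (X + C * (s - t))) s)"
    and "integral {max 0 (t - (1 - X) / C)..t} (\<lambda>s. exp (s - t) * Rf \<alpha> c V U (X - C * (s - t)) s)
      = integral {entry_V X t..t} (\<lambda>s. exp (s - t) * Rf \<alpha> c V U (wrap (X - C * (s - t))) s)"
  using characteristic_in_unit[OF assms] wrap_DBC[OF assms(1)] assms(1)
  unfolding entry_U_def entry_V_def by (auto intro!: integral_cong)

lemma mild_sol_iff:
  "mild_sol bc \<alpha> c u0 v0 U V \<longleftrightarrow>
    continuous_on ({0..1} \<times> {0..}) (\<lambda>(X, t). U X t) \<and>
    continuous_on ({0..1} \<times> {0..}) (\<lambda>(X, t). V X t) \<and>
    (bc = PBC \<longrightarrow> (\<forall>t\<ge>0. U 0 t = U 1 t \<and> V 0 t = V 1 t)) \<and>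
    (\<forall>X\<in>{0..1}. \<forall>t\<ge>0.
      U X t = U0 (wrap (X - C * t)) * exp (- t)
        + integral {entry_U X t..t} (\<lambda>s. exp (s - t) * Rf \<alpha> c U V (wrap (X + C * (s - t))) s) \<and>
      V X t = V0 (wrap (X + C * t)) * exp (- t)
        + integral {entry_V X t..t} (\<lambda>s. exp (s - t) * Rf \<alpha> c V U (wrap (X - C * (s - t))) s))"
proof (cases bc)
  case PBC
  then show ?thesis
    unfolding mild_sol_def Let_def wrap_def entry_U_def entry_V_def U0_def V0_def C_def by simp
next
  case DBC
  then show ?thesis
    unfolding mild_sol_def Let_def U0_def[symmetric] V0_def[symmetric] C_def[symmetric]
    using DBC_initial_terms[OF DBC] DBC_integral_terms[OF DBC] by auto
qed

text \<open>The reaction term with its arguments cut off at zero: it is globally bounded and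
  Lipschitz, and coincides with \<open>Rf\<close> on nonnegative functions.\<close>

definition R_ext :: "real \<Rightarrow> real \<Rightarrow> real \<Rightarrow> real" where
  "R_ext y p q = \<alpha> * max 0 q / (1 + beta c (wrap y) * (max 0 p + max 0 q))"

lemma R_ext_denominator_pos: "1 + beta c (wrap y) * (max 0 p + max 0 q) > 0"
  using beta_pos[OF wrap_in_unit, of y] by (smt (verit) mult_nonneg_nonneg max.cobounded1)

lemma continuous_on_R_ext[continuous_intros]:
  "continuous_on S f \<Longrightarrow> continuous_on S g \<Longrightarrow> continuous_on S h
    \<Longrightarrow> continuous_on S (\<lambda>x. R_ext (f x) (g x) (h x))"
  unfolding R_ext_def using R_ext_denominator_pos by (intro continuous_intros) (auto simp: less_le)

lemma R_ext_bounds: "0 \<le> R_ext y p q \<and> R_ext y p q \<le> \<alpha> * cu / C"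
proof -
  define b where "b = beta c (wrap y)"
  have b: "C / cu \<le> b" "b > 0" unfolding b_def using beta_bounds beta_pos wrap_in_unit by auto
  have "max 0 q * b \<le> 1 + b * (max 0 p + max 0 q)" using b by (simp add: algebra_simps)
  then have "max 0 q / (1 + b * (max 0 p + max 0 q)) \<le> 1 / b"
    using b R_ext_denominator_pos[of y p q] by (simp add: field_simps b_def)
  also have "1 / b \<le> cu / C" using b C_pos cu_pos by (simp add: field_simps)
  finally have "\<alpha> * (max 0 q / (1 + b * (max 0 p + max 0 q))) \<le> \<alpha> * (cu / C)"
    using alpha_nonneg by (rule mult_left_mono)
  then show ?thesis
    unfolding R_ext_def b_def[symmetric] using alpha_nonneg R_ext_denominator_pos[of y p q]
    by (simp add: b_def)
qed

lemma R_ext_lipschitz: "\<bar>R_ext y p q - R_ext y p' q'\<bar> \<le> 4 * \<alpha> * (\<bar>p - p'\<bar> + \<bar>q - q'\<bar>)"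
proof -
  have "\<bar>R_ext y p q - R_ext y p' q'\<bar> \<le> 4 * \<alpha> * (\<bar>max 0 p - max 0 p'\<bar> + \<bar>max 0 q - max 0 q'\<bar>)"
    unfolding R_ext_def using alpha_nonneg beta_pos[OF wrap_in_unit]
    by (intro saturation_lipschitz[where \<delta> = 0]) (auto simp: less_imp_le)
  also have "\<dots> \<le> 4 * \<alpha> * (\<bar>p - p'\<bar> + \<bar>q - q'\<bar>)"
    using alpha_nonneg by (intro mult_left_mono add_mono) (auto simp: abs_le_iff max_def)
  finally show ?thesis .
qed

definition GU :: "(real \<times> real \<Rightarrow> real \<times> real) \<Rightarrow> real \<Rightarrow> real \<Rightarrow> real" where
  "GU W y s = R_ext y (fst (W (y, s))) (snd (W (y, s)))"

definition GV :: "(real \<times> real \<Rightarrow> real \<times> real) \<Rightarrow> real \<Rightarrow> real \<Rightarrow> real" where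
  "GV W y s = R_ext y (snd (W (y, s))) (fst (W (y, s)))"

text \<open>The Duhamel map, extended to all \<open>(X, t)\<close> so that it acts on continuous functions of the
  whole plane; \<open>X\<close> is clamped only for (DBC), so that for (PBC) the map stays 1-periodic in \<open>X\<close>.\<close>

definition PhiU :: "(real \<times> real \<Rightarrow> real \<times> real) \<Rightarrow> real \<Rightarrow> real \<Rightarrow> real" where
  "PhiU W X t = U0 (wrap (dbc_clamp X - C * max 0 t)) * exp (- max 0 t)
     + char_integral (GU W) C (entry_U (dbc_clamp X) (max 0 t)) (dbc_clamp X) (max 0 t)"

definition PhiV :: "(real \<times> real \<Rightarrow> real \<times> real) \<Rightarrow> real \<Rightarrow> real \<Rightarrow> real" where
  "PhiV W X t = V0 (wrap (dbc_clamp X + C * max 0 t)) * exp (- max 0 t)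
     + char_integral (GV W) (- C) (entry_V (dbc_clamp X) (max 0 t)) (dbc_clamp X) (max 0 t)"

lemma continuous_on_GU: "continuous_on UNIV W \<Longrightarrow> continuous_on UNIV (\<lambda>q. GU W (fst q) (snd q))"
  and continuous_on_GV: "continuous_on UNIV W \<Longrightarrow> continuous_on UNIV (\<lambda>q. GV W (fst q) (snd q))"
  unfolding GU_def GV_def by (auto intro!: continuous_intros continuous_on_compose2[of UNIV W])

lemma continuous_on_PhiU: "continuous_on UNIV W \<Longrightarrow> continuous_on UNIV (\<lambda>p. PhiU W (fst p) (snd p))"
  unfolding PhiU_def
  by (intro continuous_intros continuous_on_char_integral continuous_on_GU continuous_on_entry)
     (use entry_bounds[OF dbc_clamp_cases max.cobounded1] in auto)

lemma continuous_on_PhiV: "continuous_on UNIV W \<Longrightarrow> continuous_on UNIV (\<lambda>p. PhiV W (fst p) (snd p))"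
  unfolding PhiV_def
  by (intro continuous_intros continuous_on_char_integral continuous_on_GV continuous_on_entry)
     (use entry_bounds[OF dbc_clamp_cases max.cobounded1] in auto)

lemma PhiU_bounds:
  assumes "continuous_on UNIV W"
  shows "0 \<le> PhiU W X t \<and> PhiU W X t \<le> bound u0"
  unfolding PhiU_def
proof (rule convex_combination_bounds)
  let ?x = "dbc_clamp X" and ?t = "max 0 t"
  have "0 \<le> GU W y s \<and> GU W y s \<le> bound u0" for y s
    unfolding GU_def using R_ext_bounds bound_ge by (meson order_trans)
  then have "0 \<le> char_integral (GU W) C (entry_U ?x ?t) ?x ?t
      \<and> char_integral (GU W) C (entry_U ?x ?t) ?x ?t \<le> bound u0 * (1 - exp (- ?t))"
    using entry_bounds(1)[OF dbc_clamp_cases max.cobounded1, of X t]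
    by (intro char_integral_bounds[OF continuous_on_GU[OF assms]]) auto
  then show "0 \<le> char_integral (GU W) C (entry_U ?x ?t) ?x ?t"
    "char_integral (GU W) C (entry_U ?x ?t) ?x ?t \<le> bound u0 * (1 - exp (- ?t))"
    by auto
qed (use U0_bounds[OF wrap_in_unit] in auto)

lemma PhiV_bounds:
  assumes "continuous_on UNIV W"
  shows "0 \<le> PhiV W X t \<and> PhiV W X t \<le> bound v0"
  unfolding PhiV_def
proof (rule convex_combination_bounds)
  let ?x = "dbc_clamp X" and ?t = "max 0 t"
  have "0 \<le> GV W y s \<and> GV W y s \<le> bound v0" for y s
    unfolding GV_def using R_ext_bounds bound_ge by (meson order_trans)
  then have "0 \<le> char_integral (GV W) (- C) (entry_V ?x ?t) ?x ?t
      \<and> char_integral (GV W) (- C) (entry_V ?x ?t) ?x ?t \<le> bound v0 * (1 - exp (- ?t))"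
    using entry_bounds(2)[OF dbc_clamp_cases max.cobounded1, of X t]
    by (intro char_integral_bounds[OF continuous_on_GV[OF assms]]) auto
  then show "0 \<le> char_integral (GV W) (- C) (entry_V ?x ?t) ?x ?t"
    "char_integral (GV W) (- C) (entry_V ?x ?t) ?x ?t \<le> bound v0 * (1 - exp (- ?t))"
    by auto
qed (use V0_bounds[OF wrap_in_unit] in auto)

lemma GU_lipschitz:
  "\<bar>GU W1 y s - GU W2 y s\<bar>
    \<le> 4 * \<alpha> * (\<bar>fst (W1 (y, s)) - fst (W2 (y, s))\<bar> + \<bar>snd (W1 (y, s)) - snd (W2 (y, s))\<bar>)"
  unfolding GU_def by (rule R_ext_lipschitz)

lemma GV_lipschitz:
  "\<bar>GV W1 y s - GV W2 y s\<bar>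
    \<le> 4 * \<alpha> * (\<bar>fst (W1 (y, s)) - fst (W2 (y, s))\<bar> + \<bar>snd (W1 (y, s)) - snd (W2 (y, s))\<bar>)"
  unfolding GV_def
  using R_ext_lipschitz[of y "snd (W1 (y, s))" "fst (W1 (y, s))" "snd (W2 (y, s))" "fst (W2 (y, s))"]
  by (simp add: add.commute)

lemma PhiU_diff:
  assumes W1: "continuous_on UNIV W1" and W2: "continuous_on UNIV W2" and "l > 0"
    and diff: "\<And>y s. s \<ge> 0 \<Longrightarrow>
      \<bar>fst (W1 (y, s)) - fst (W2 (y, s))\<bar> + \<bar>snd (W1 (y, s)) - snd (W2 (y, s))\<bar> \<le> K * exp (l * s)"
  shows "\<bar>PhiU W1 X t - PhiU W2 X t\<bar> \<le> 4 * \<alpha> * K * exp (l * max 0 t) / l"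
  unfolding PhiU_def
proof (simp, rule char_integral_diff[OF continuous_on_GU[OF W1] continuous_on_GU[OF W2]])
  show "\<bar>GU W1 y s - GU W2 y s\<bar> \<le> 4 * \<alpha> * K * exp (l * s)" if "s \<ge> 0" for y s
    using GU_lipschitz[of W1 y s W2] mult_left_mono[OF diff[of s y, OF that] alpha_nonneg]
    by linarith
qed (use entry_bounds(1)[OF dbc_clamp_cases max.cobounded1, of X t] \<open>l > 0\<close> in auto)

lemma PhiV_diff:
  assumes W1: "continuous_on UNIV W1" and W2: "continuous_on UNIV W2" and "l > 0"
    and diff: "\<And>y s. s \<ge> 0 \<Longrightarrow>
      \<bar>fst (W1 (y, s)) - fst (W2 (y, s))\<bar> + \<bar>snd (W1 (y, s)) - snd (W2 (y, s))\<bar> \<le> K * exp (l * s)"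
  shows "\<bar>PhiV W1 X t - PhiV W2 X t\<bar> \<le> 4 * \<alpha> * K * exp (l * max 0 t) / l"
  unfolding PhiV_def
proof (simp, rule char_integral_diff[OF continuous_on_GV[OF W1] continuous_on_GV[OF W2]])
  show "\<bar>GV W1 y s - GV W2 y s\<bar> \<le> 4 * \<alpha> * K * exp (l * s)" if "s \<ge> 0" for y s
    using GV_lipschitz[of W1 y s W2] mult_left_mono[OF diff[of s y, OF that] alpha_nonneg]
    by linarith
qed (use entry_bounds(2)[OF dbc_clamp_cases max.cobounded1, of X t] \<open>l > 0\<close> in auto)

lemma GU_GV_periodic:
  assumes "bc = PBC" and W: "\<And>y s. W (y + 1, s) = W (y, s)"
  shows "GU W (y + 1) s = GU W y s" "GV W (y + 1) s = GV W y s"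
  unfolding GU_def GV_def R_ext_def using wrap_periodic[OF assms(1)] W by simp_all

lemma PhiU_periodic:
  assumes "bc = PBC" and W: "\<And>y s. W (y + 1, s) = W (y, s)"
  shows "PhiU W (X + 1) t = PhiU W X t"
proof -
  have "GU W (X + 1 + C * (s - t')) s = GU W (X + C * (s - t')) s" for s t'
    using GU_GV_periodic(1)[OF assms, of "X + C * (s - t')"] by (simp add: algebra_simps)
  moreover have "wrap (X + 1 - C * t') = wrap (X - C * t')" for t'
    using wrap_periodic[OF assms(1), of "X - C * t'"] by (simp add: algebra_simps)
  ultimately show ?thesis
    unfolding PhiU_def char_integral_def dbc_clamp_def entry_U_def using assms(1) by simp
qed

lemma PhiV_periodic:
  assumes "bc = PBC" and W: "\<And>y s. W (y + 1, s) = W (y, s)"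
  shows "PhiV W (X + 1) t = PhiV W X t"
proof -
  have "GV W (X + 1 + - C * (s - t')) s = GV W (X + - C * (s - t')) s" for s t'
    using GU_GV_periodic(2)[OF assms, of "X - C * (s - t')"] by (simp add: algebra_simps)
  moreover have "wrap (X + 1 + C * t') = wrap (X + C * t')" for t'
    using wrap_periodic[OF assms(1), of "X + C * t'"] by (simp add: algebra_simps)
  ultimately show ?thesis
    unfolding PhiV_def char_integral_def dbc_clamp_def entry_V_def using assms(1) by simp
qed

end

section \<open>Existence\<close>

context transport_problem
begin

text \<open>The Duhamel map is a contraction on bounded continuous functions once the time
  growth \<open>exp (rate * t)\<close> is factored out; \<open>rate\<close> is chosen so that the factor
  \<open>16 * \<alpha> / rate\<close> coming from \<open>PhiU_diff\<close> and \<open>PhiV_diff\<close> is at most \<open>1/2\<close>.\<close>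

definition rate :: real where "rate = 32 * \<alpha> + 1"

lemma rate_pos: "rate > 0"
  unfolding rate_def using alpha_nonneg by simp

definition unweight :: "((real \<times> real) \<Rightarrow>\<^sub>C (real \<times> real)) \<Rightarrow> real \<times> real \<Rightarrow> real \<times> real" where
  "unweight Z = (\<lambda>p. exp (rate * snd p) *\<^sub>R apply_bcontfun Z p)"

definition Psi_fun :: "((real \<times> real) \<Rightarrow>\<^sub>C (real \<times> real)) \<Rightarrow> real \<times> real \<Rightarrow> real \<times> real" where
  "Psi_fun Z = (\<lambda>(X, t). exp (- rate * max 0 t) *\<^sub>R (PhiU (unweight Z) X t, PhiV (unweight Z) X t))"

lemma continuous_on_unweight: "continuous_on UNIV (unweight Z)"
  unfolding unweight_def by (auto intro!: continuous_intros)

lemma Psi_fun_bcontfun: "Psi_fun Z \<in> bcontfun"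
proof (rule bcontfun_normI)
  show "continuous_on UNIV (Psi_fun Z)"
    using continuous_on_PhiU[OF continuous_on_unweight] continuous_on_PhiV[OF continuous_on_unweight]
    unfolding Psi_fun_def split_beta by (intro continuous_intros) auto
  fix p :: "real \<times> real"
  obtain X t where p: "p = (X, t)" by fastforce
  have e: "0 \<le> exp (- rate * max 0 t)" "exp (- rate * max 0 t) \<le> 1"
    using rate_pos by auto
  have "norm (Psi_fun Z p) \<le> \<bar>exp (- rate * max 0 t) * PhiU (unweight Z) X t\<bar>
      + \<bar>exp (- rate * max 0 t) * PhiV (unweight Z) X t\<bar>"
    unfolding Psi_fun_def p by (simp add: norm_Pair_le flip: real_norm_def)
  also have "\<dots> \<le> 1 * bound u0 + 1 * bound v0"
    unfolding abs_mult
    using PhiU_bounds[OF continuous_on_unweight] PhiV_bounds[OF continuous_on_unweight] e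
    by (intro add_mono mult_mono) auto
  finally show "norm (Psi_fun Z p) \<le> bound u0 + bound v0" by simp
qed

definition Psi :: "((real \<times> real) \<Rightarrow>\<^sub>C (real \<times> real)) \<Rightarrow> ((real \<times> real) \<Rightarrow>\<^sub>C (real \<times> real))" where
  "Psi Z = Bcontfun (Psi_fun Z)"

lemma apply_Psi: "apply_bcontfun (Psi Z) = Psi_fun Z"
  unfolding Psi_def using Psi_fun_bcontfun by (simp add: Bcontfun_inverse)

lemma unweight_diff:
  "\<bar>fst (unweight Z1 (y, s)) - fst (unweight Z2 (y, s))\<bar> + \<bar>snd (unweight Z1 (y, s)) - snd (unweight Z2 (y, s))\<bar>
    \<le> 2 * dist Z1 Z2 * exp (rate * s)"
proof -
  define z where "z = apply_bcontfun Z1 (y, s) - apply_bcontfun Z2 (y, s)"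
  have "norm z \<le> dist Z1 Z2"
    unfolding z_def using dist_bounded[of Z1 "(y, s)" Z2] by (simp add: dist_norm)
  then have "\<bar>fst z\<bar> + \<bar>snd z\<bar> \<le> 2 * dist Z1 Z2"
    using norm_fst_le[of "fst z" "snd z"] norm_snd_le[of "snd z" "fst z"] by simp
  then have "exp (rate * s) * (\<bar>fst z\<bar> + \<bar>snd z\<bar>) \<le> exp (rate * s) * (2 * dist Z1 Z2)"
    by (intro mult_left_mono) auto
  moreover have "fst (unweight Z1 (y, s)) - fst (unweight Z2 (y, s)) = exp (rate * s) * fst z"
    "snd (unweight Z1 (y, s)) - snd (unweight Z2 (y, s)) = exp (rate * s) * snd z"
    unfolding unweight_def z_def by (simp_all add: right_diff_distrib)
  ultimately show ?thesis by (simp add: abs_mult distrib_left mult.commute)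
qed

lemma weighted_difference:
  assumes "\<bar>A - B\<bar> \<le> 4 * \<alpha> * (2 * d) * exp (rate * \<tau>) / rate"
  shows "\<bar>exp (- rate * \<tau>) * A - exp (- rate * \<tau>) * B\<bar> \<le> 8 * \<alpha> * d / rate"
proof -
  have "\<bar>exp (- rate * \<tau>) * A - exp (- rate * \<tau>) * B\<bar> = exp (- rate * \<tau>) * \<bar>A - B\<bar>"
    by (simp add: abs_mult flip: right_diff_distrib)
  also have "\<dots> \<le> exp (- rate * \<tau>) * (4 * \<alpha> * (2 * d) * exp (rate * \<tau>) / rate)"
    using assms by (intro mult_left_mono) auto
  also have "\<dots> = (exp (- rate * \<tau>) * exp (rate * \<tau>)) * (8 * \<alpha> * d) / rate"
    by (simp add: ac_simps)
  also have "\<dots> = 8 * \<alpha> * d / rate"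
    by (simp flip: exp_add)
  finally show ?thesis .
qed

lemma Psi_contraction: "dist (Psi Z1) (Psi Z2) \<le> 1/2 * dist Z1 Z2"
proof (rule dist_bound)
  fix p :: "real \<times> real"
  obtain X t where p: "p = (X, t)" by fastforce
  define d where "d = dist Z1 Z2"
  define e where "e = exp (- rate * max 0 t)"
  have "\<bar>e * PhiU (unweight Z1) X t - e * PhiU (unweight Z2) X t\<bar> \<le> 8 * \<alpha> * d / rate"
    "\<bar>e * PhiV (unweight Z1) X t - e * PhiV (unweight Z2) X t\<bar> \<le> 8 * \<alpha> * d / rate"
    unfolding e_def d_def
    by (intro weighted_difference
        PhiU_diff[OF continuous_on_unweight continuous_on_unweight rate_pos unweight_diff]
        PhiV_diff[OF continuous_on_unweight continuous_on_unweight rate_pos unweight_diff])+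
  moreover have "dist (Psi Z1 p) (Psi Z2 p) = norm (e * PhiU (unweight Z1) X t - e * PhiU (unweight Z2) X t,
      e * PhiV (unweight Z1) X t - e * PhiV (unweight Z2) X t)"
    unfolding apply_Psi Psi_fun_def p dist_norm e_def by simp
  ultimately have "dist (Psi Z1 p) (Psi Z2 p) \<le> 8 * \<alpha> * d / rate + 8 * \<alpha> * d / rate"
    using norm_Pair_le[of "e * PhiU (unweight Z1) X t - e * PhiU (unweight Z2) X t"
        "e * PhiV (unweight Z1) X t - e * PhiV (unweight Z2) X t"] by simp
  also have "\<dots> \<le> 1/2 * d"
  proof -
    have "16 * \<alpha> * d \<le> rate / 2 * d"
      unfolding rate_def d_def using alpha_nonneg by (intro mult_right_mono) auto
    then show ?thesis using rate_pos by (simp add: field_simps)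
  qed
  finally show "dist (Psi Z1 p) (Psi Z2 p) \<le> 1/2 * dist Z1 Z2" unfolding d_def .
qed

definition periodic_maps :: "((real \<times> real) \<Rightarrow>\<^sub>C (real \<times> real)) set" where
  "periodic_maps = {Z. bc = PBC \<longrightarrow> (\<forall>X t. apply_bcontfun Z (X + 1, t) = apply_bcontfun Z (X, t))}"

lemma closed_periodic_maps: "closed periodic_maps"
proof (cases "bc = PBC")
  case True
  then have "periodic_maps = (\<Inter>q. {Z. apply_bcontfun Z (fst q + 1, snd q) = apply_bcontfun Z q})"
    unfolding periodic_maps_def by auto
  then show ?thesis
    by (simp add: closed_INT closed_Collect_eq continuous_on_eval_bcontfun)
qed (simp add: periodic_maps_def)

lemma zero_in_periodic_maps: "0 \<in> periodic_maps"
  unfolding periodic_maps_def by simp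

lemma Psi_periodic_maps:
  assumes "Z \<in> periodic_maps"
  shows "Psi Z \<in> periodic_maps"
proof (cases "bc = PBC")
  case True
  then have "unweight Z (y + 1, s) = unweight Z (y, s)" for y s
    using assms unfolding periodic_maps_def unweight_def by simp
  then have "PhiU (unweight Z) (X + 1) t = PhiU (unweight Z) X t"
    "PhiV (unweight Z) (X + 1) t = PhiV (unweight Z) X t" for X t
    using PhiU_periodic[OF True] PhiV_periodic[OF True] by blast+
  then show ?thesis unfolding periodic_maps_def mem_Collect_eq apply_Psi Psi_fun_def by (simp add: True)
qed (unfold periodic_maps_def, simp)

lemma Psi_fixed_point: "\<exists>Z\<in>periodic_maps. Psi Z = Z"
proof -
  have "\<exists>!Z\<in>periodic_maps. Psi Z = Z"
    using Psi_periodic_maps Psi_contraction zero_in_periodic_maps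
    by (intro Banach_fix[where c="1/2"] complete_closed_subset[OF closed_periodic_maps subset_UNIV complete_UNIV])
       auto
  then show ?thesis by blast
qed

definition W_sol :: "real \<times> real \<Rightarrow> real \<times> real" where
  "W_sol = unweight (SOME Z. Z \<in> periodic_maps \<and> Psi Z = Z)"

definition U_sol :: "real \<Rightarrow> real \<Rightarrow> real" where "U_sol X t = fst (W_sol (X, t))"

definition V_sol :: "real \<Rightarrow> real \<Rightarrow> real" where "V_sol X t = snd (W_sol (X, t))"

lemma W_sol_fixed_point: "\<exists>Z\<in>periodic_maps. Psi Z = Z \<and> W_sol = unweight Z"
  unfolding W_sol_def using someI_ex[OF Psi_fixed_point[unfolded Bex_def]] by blast

lemma continuous_on_W_sol: "continuous_on UNIV W_sol"
  unfolding W_sol_def by (rule continuous_on_unweight)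

lemma W_sol_periodic: "bc = PBC \<Longrightarrow> W_sol (y + 1, s) = W_sol (y, s)"
  using W_sol_fixed_point unfolding periodic_maps_def unweight_def by auto

lemma W_sol_frac: "bc = PBC \<Longrightarrow> W_sol (frac y, s) = W_sol (y, s)"
proof -
  assume "bc = PBC"
  then interpret periodic_fun_simple' "\<lambda>y. W_sol (y, s)"
    by unfold_locales (rule W_sol_periodic)
  show ?thesis using minus_of_int[of y "\<lfloor>y\<rfloor>"] by (simp add: frac_def)
qed

lemma sol_Duhamel:
  assumes "t \<ge> 0"
  shows "U_sol X t = PhiU W_sol X t" "V_sol X t = PhiV W_sol X t"
proof -
  obtain Z where Z: "Psi Z = Z" "W_sol = unweight Z" using W_sol_fixed_point by blast
  have "W_sol (X, t) = exp (rate * t) *\<^sub>R Psi_fun Z (X, t)"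
    using Z apply_Psi by (metis snd_conv unweight_def)
  also have "\<dots> = (PhiU W_sol X t, PhiV W_sol X t)"
    unfolding Psi_fun_def Z(2)[symmetric] using assms by (simp add: exp_add[symmetric])
  finally show "U_sol X t = PhiU W_sol X t" "V_sol X t = PhiV W_sol X t"
    by (simp_all add: U_sol_def V_sol_def)
qed

lemma sol_bounds:
  assumes "t \<ge> 0"
  shows "0 \<le> U_sol X t \<and> U_sol X t \<le> bound u0" "0 \<le> V_sol X t \<and> V_sol X t \<le> bound v0"
  using sol_Duhamel[OF assms] PhiU_bounds[OF continuous_on_W_sol] PhiV_bounds[OF continuous_on_W_sol]
  by simp_all

lemma W_sol_wrap: "bc = PBC \<or> y \<in> {0..1} \<Longrightarrow> W_sol (wrap y, s) = W_sol (y, s)"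
  using W_sol_frac wrap_DBC unfolding wrap_def by (cases bc) auto

lemma GU_GV_W_sol:
  assumes "s \<ge> 0" "bc = PBC \<or> y \<in> {0..1}"
  shows "GU W_sol y s = Rf \<alpha> c U_sol V_sol (wrap y) s" "GV W_sol y s = Rf \<alpha> c V_sol U_sol (wrap y) s"
  using sol_bounds[OF assms(1), of y] W_sol_wrap[OF assms(2), of s]
  unfolding GU_def GV_def R_ext_def Rf_def U_sol_def V_sol_def by (simp_all add: add.commute)

lemma mild_sol_sol: "mild_sol bc \<alpha> c u0 v0 U_sol V_sol"
  unfolding mild_sol_iff
proof (intro conjI ballI allI impI)
  show "continuous_on ({0..1} \<times> {0..}) (\<lambda>(X, t). U_sol X t)"
    "continuous_on ({0..1} \<times> {0..}) (\<lambda>(X, t). V_sol X t)"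
    unfolding U_sol_def V_sol_def split_beta prod.collapse
    by (intro continuous_intros continuous_on_subset[OF continuous_on_W_sol] subset_UNIV)+
  show "U_sol 0 t = U_sol 1 t" "V_sol 0 t = V_sol 1 t" if "bc = PBC" for t
    using W_sol_periodic[OF that, of 0 t] by (simp_all add: U_sol_def V_sol_def)
  fix X t :: real assume X: "X \<in> {0..1}" and t: "t \<ge> 0"
  have on_char: "bc = PBC \<or> X + C * (s - t) \<in> {0..1}" if "s \<in> {entry_U X t..t}" for s
    using characteristic_in_unit(1)[OF _ X that] by (cases bc) auto
  have "char_integral (GU W_sol) C (entry_U X t) X t
      = integral {entry_U X t..t} (\<lambda>s. exp (s - t) * Rf \<alpha> c U_sol V_sol (wrap (X + C * (s - t))) s)"
    unfolding char_integral_def using GU_GV_W_sol(1) on_char entry_bounds(1)[of X t] X t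
    by (intro integral_cong) auto
  then show "U_sol X t = U0 (wrap (X - C * t)) * exp (- t)
      + integral {entry_U X t..t} (\<lambda>s. exp (s - t) * Rf \<alpha> c U_sol V_sol (wrap (X + C * (s - t))) s)"
    using sol_Duhamel(1)[OF t, of X] t unfolding PhiU_def dbc_clamp_id[OF X] by simp
  have on_char: "bc = PBC \<or> X - C * (s - t) \<in> {0..1}" if "s \<in> {entry_V X t..t}" for s
    using characteristic_in_unit(2)[OF _ X that] by (cases bc) auto
  have "char_integral (GV W_sol) (- C) (entry_V X t) X t
      = integral {entry_V X t..t} (\<lambda>s. exp (s - t) * Rf \<alpha> c V_sol U_sol (wrap (X - C * (s - t))) s)"
    unfolding char_integral_def using GU_GV_W_sol(2) on_char entry_bounds(2)[of X t] X t
    by (intro integral_cong) auto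
  then show "V_sol X t = V0 (wrap (X + C * t)) * exp (- t)
      + integral {entry_V X t..t} (\<lambda>s. exp (s - t) * Rf \<alpha> c V_sol U_sol (wrap (X - C * (s - t))) s)"
    using sol_Duhamel(2)[OF t, of X] t unfolding PhiV_def dbc_clamp_id[OF X] by simp
qed

lemma phys_bounds:
  assumes "x \<in> {0..1}" "t \<ge> 0"
  shows "0 \<le> phys c U_sol x t \<and> phys c U_sol x t \<le> cu / cl * max (Sup (u0 ` {0..1})) \<alpha>"
    and "0 \<le> phys c V_sol x t \<and> phys c V_sol x t \<le> cu / cl * max (Sup (v0 ` {0..1})) \<alpha>"
proof -
  have c: "cl \<le> c x" "0 < c x" using c_bounds[OF assms(1)] c_pos[OF assms(1)] by auto
  have scale: "0 \<le> C / c x * w \<and> C / c x * w \<le> cu / cl * m" if "0 \<le> w" "w \<le> cu / C * m" "0 \<le> m" for w m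
  proof -
    have "C / c x * w \<le> C / c x * (cu / C * m)" using that c C_pos by (intro mult_left_mono) auto
    also have "\<dots> = cu * m / c x" using C_pos by simp
    also have "\<dots> \<le> cu * m / cl" using c cl_pos cu_pos that by (intro divide_left_mono) auto
    finally show ?thesis using that c C_pos by simp
  qed
  show "0 \<le> phys c U_sol x t \<and> phys c U_sol x t \<le> cu / cl * max (Sup (u0 ` {0..1})) \<alpha>"
    "0 \<le> phys c V_sol x t \<and> phys c V_sol x t \<le> cu / cl * max (Sup (v0 ` {0..1})) \<alpha>"
    unfolding phys_def C_def[symmetric]
    using sol_bounds[OF assms(2), of "Xmap c x"] scale alpha_nonneg unfolding bound_def
    by (meson max.coboundedI2)+
qed

end

section \<open>Uniqueness\<close>

context transport_problem
begin

text \<open>A competing mild solution is not known to be nonnegative, so the reaction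
  term is Lipschitz only while it stays above \<open>- slack\<close>, where its denominator is at least
  \<open>1/2\<close>; agreement is therefore propagated forward in time in small steps.\<close>

definition slack :: real where "slack = cl / (4 * C)"

lemma slack_pos: "slack > 0"
  unfolding slack_def using cl_pos C_pos by simp

lemma four_beta_slack: "y \<in> {0..1} \<Longrightarrow> 4 * beta c y * slack \<le> 1"
  using beta_bounds[of y] slack_pos cl_pos C_pos
  by (auto simp: slack_def field_simps dest!: mult_right_mono[where c = "4 * cl"])

lemma Rf_denominator_ge_half:
  assumes "y \<in> {0..1}" "p \<ge> - slack" "q \<ge> - slack"
  shows "1 + beta c y * (p + q) \<ge> 1/2"
proof -
  have "beta c y * (p + q) \<ge> beta c y * (- 2 * slack)"
    using assms beta_pos[OF assms(1)] by (intro mult_left_mono) auto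
  then show ?thesis using four_beta_slack[OF assms(1)] by linarith
qed

lemma Rf_lipschitz_above_slack:
  assumes "y \<in> {0..1}" "P y s \<ge> 0" "Q y s \<ge> 0" "P' y s \<ge> - slack" "Q' y s \<ge> - slack"
  shows "\<bar>Rf \<alpha> c P' Q' y s - Rf \<alpha> c P Q y s\<bar> \<le> 4 * \<alpha> * (\<bar>P' y s - P y s\<bar> + \<bar>Q' y s - Q y s\<bar>)"
  unfolding Rf_def
  using saturation_lipschitz[of \<alpha> "beta c y" "P y s" "Q y s" slack "P' y s" "Q' y s"]
    assms alpha_nonneg beta_pos[OF assms(1)] four_beta_slack[OF assms(1)]
  by (simp add: abs_minus_commute)

lemma continuous_on_Rf_along:
  fixes P Q :: "real \<Rightarrow> real \<Rightarrow> real" and a :: "real \<Rightarrow> real"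
  assumes "continuous_on S (\<lambda>s. P (a s) s)" "continuous_on S (\<lambda>s. Q (a s) s)"
    "continuous_on S (\<lambda>s. beta c (a s))"
    and above: "\<And>s. s \<in> S \<Longrightarrow> a s \<in> {0..1} \<and> P (a s) s \<ge> - slack \<and> Q (a s) s \<ge> - slack"
  shows "continuous_on S (\<lambda>s. exp (s - t) * Rf \<alpha> c P Q (a s) s)"
proof -
  have "1 + beta c (a s) * (P (a s) s + Q (a s) s) \<noteq> 0" if "s \<in> S" for s
    using Rf_denominator_ge_half above[OF that] by fastforce
  then show ?thesis unfolding Rf_def by (intro continuous_intros assms) auto
qed

lemma continuous_on_along_characteristic:
  fixes f :: "real \<Rightarrow> real \<Rightarrow> real"
  assumes f: "continuous_on ({0..1} \<times> {0..}) (\<lambda>(y, s). f y s)"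
    and per: "bc = PBC \<Longrightarrow> \<forall>s\<in>{0..}. f 0 s = f 1 s" and X: "X \<in> {0..1}" and "t \<ge> 0"
  shows "continuous_on {entry_U X t..t} (\<lambda>s. f (wrap (X + C * (s - t))) s)"
    and "continuous_on {entry_V X t..t} (\<lambda>s. f (wrap (X - C * (s - t))) s)"
proof -
  have entry: "{entry_U X t..t} \<subseteq> {0..}" "{entry_V X t..t} \<subseteq> {0..}"
    using entry_bounds[of X t] X \<open>t \<ge> 0\<close> by auto
  have "continuous_on {entry_U X t..t} (\<lambda>s. f (wrap (X + C * (s - t))) s)
      \<and> continuous_on {entry_V X t..t} (\<lambda>s. f (wrap (X - C * (s - t))) s)"
  proof (cases bc)
    case PBC
    have "continuous_on (UNIV \<times> {0..}) (\<lambda>(y, s). f (frac y) s)"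
      by (rule continuous_on_compose_frac2[OF f per[OF PBC]]) auto
    then have "continuous_on {0..t} (\<lambda>s. (\<lambda>(y, s). f (frac y) s) (X + C * (s - t), s))"
      "continuous_on {0..t} (\<lambda>s. (\<lambda>(y, s). f (frac y) s) (X - C * (s - t), s))"
      by (intro continuous_on_compose2[OF \<open>continuous_on (UNIV \<times> {0..}) _\<close>] continuous_intros; auto)+
    then show ?thesis
      unfolding wrap_def entry_U_def entry_V_def using PBC by simp
  next
    case DBC
    note on_char = characteristic_in_unit[OF DBC X]
    have "continuous_on {entry_U X t..t} (\<lambda>s. (\<lambda>(y, s). f y s) (X + C * (s - t), s))"
      "continuous_on {entry_V X t..t} (\<lambda>s. (\<lambda>(y, s). f y s) (X - C * (s - t), s))"
      using on_char entry by (intro continuous_on_compose2[OF f] continuous_intros; force)+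
    moreover have "f (wrap (X + C * (s - t))) s = (\<lambda>(y, s). f y s) (X + C * (s - t), s)"
      if "s \<in> {entry_U X t..t}" for s
      using wrap_DBC[OF DBC on_char(1)[OF that]] by simp
    moreover have "f (wrap (X - C * (s - t))) s = (\<lambda>(y, s). f y s) (X - C * (s - t), s)"
      if "s \<in> {entry_V X t..t}" for s
      using wrap_DBC[OF DBC on_char(2)[OF that]] by simp
    ultimately show ?thesis by (auto intro: continuous_on_eq)
  qed
  then show "continuous_on {entry_U X t..t} (\<lambda>s. f (wrap (X + C * (s - t))) s)"
    "continuous_on {entry_V X t..t} (\<lambda>s. f (wrap (X - C * (s - t))) s)" by auto
qed

lemma continuous_on_mild_sol_along:
  assumes sol: "mild_sol bc \<alpha> c u0 v0 U V" and X: "X \<in> {0..1}" and "t \<ge> 0"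
    and W: "W \<in> {U, V, \<lambda>y s. beta c y}"
  shows "continuous_on {entry_U X t..t} (\<lambda>s. W (wrap (X + C * (s - t))) s)"
    and "continuous_on {entry_V X t..t} (\<lambda>s. W (wrap (X - C * (s - t))) s)"
proof -
  have "continuous_on ({0..1} \<times> {0..}) (\<lambda>p :: real \<times> real. beta c (fst p))"
    by (rule continuous_on_compose2[OF continuous_on_beta]) (auto intro!: continuous_intros)
  then have "continuous_on ({0..1} \<times> {0..}) (\<lambda>(y, s). W y s)" "bc = PBC \<Longrightarrow> \<forall>s\<in>{0..}. W 0 s = W 1 s"
    using sol W boundary_values(1) unfolding mild_sol_iff split_beta by auto
  from continuous_on_along_characteristic[OF this X \<open>t \<ge> 0\<close>]
  show "continuous_on {entry_U X t..t} (\<lambda>s. W (wrap (X + C * (s - t))) s)"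
    "continuous_on {entry_V X t..t} (\<lambda>s. W (wrap (X - C * (s - t))) s)" by auto
qed

lemma Rf_integral_diff:
  fixes P Q P' Q' :: "real \<Rightarrow> real \<Rightarrow> real" and a :: "real \<Rightarrow> real"
  assumes foot: "\<And>s. s \<in> {l..t} \<Longrightarrow> a s \<in> {0..1}" and "0 \<le> l" "l \<le> t" "T \<le> t" "0 \<le> D"
    and cont: "continuous_on {l..t} (\<lambda>s. P (a s) s)" "continuous_on {l..t} (\<lambda>s. Q (a s) s)"
      "continuous_on {l..t} (\<lambda>s. P' (a s) s)" "continuous_on {l..t} (\<lambda>s. Q' (a s) s)"
      "continuous_on {l..t} (\<lambda>s. beta c (a s))"
    and above: "\<And>y s. y \<in> {0..1} \<Longrightarrow> s \<in> {0..t} \<Longrightarrow>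
      P y s \<ge> 0 \<and> Q y s \<ge> 0 \<and> P' y s \<ge> - slack \<and> Q' y s \<ge> - slack"
    and agree: "\<And>y s. y \<in> {0..1} \<Longrightarrow> s \<in> {0..T} \<Longrightarrow> P' y s = P y s \<and> Q' y s = Q y s"
    and close: "\<And>y s. y \<in> {0..1} \<Longrightarrow> s \<in> {T..t} \<Longrightarrow> \<bar>P' y s - P y s\<bar> + \<bar>Q' y s - Q y s\<bar> \<le> D"
  shows "\<bar>integral {l..t} (\<lambda>s. exp (s - t) * Rf \<alpha> c P' Q' (a s) s)
      - integral {l..t} (\<lambda>s. exp (s - t) * Rf \<alpha> c P Q (a s) s)\<bar> \<le> 4 * \<alpha> * D * (t - T)"
proof -
  have above': "a s \<in> {0..1} \<and> P (a s) s \<ge> - slack \<and> Q (a s) s \<ge> - slack"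
    "a s \<in> {0..1} \<and> P' (a s) s \<ge> - slack \<and> Q' (a s) s \<ge> - slack" if "s \<in> {l..t}" for s
    using foot[OF that] above[OF foot[OF that], of s] that \<open>0 \<le> l\<close> slack_pos by auto
  have integrable: "(\<lambda>s. exp (s - t) * Rf \<alpha> c P' Q' (a s) s) integrable_on {l..t}"
    "(\<lambda>s. exp (s - t) * Rf \<alpha> c P Q (a s) s) integrable_on {l..t}"
    using above' cont by (auto intro!: integrable_continuous_interval continuous_on_Rf_along)
  have "\<bar>integral {l..t} (\<lambda>s. exp (s - t) * Rf \<alpha> c P' Q' (a s) s - exp (s - t) * Rf \<alpha> c P Q (a s) s)\<bar>
      \<le> (4 * \<alpha> * D) * (t - T)"
  proof (rule integral_bound_vanishing_before[OF integrable_diff[OF integrable]])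
    fix s assume s: "s \<in> {l..t}"
    then have y: "a s \<in> {0..1}" and "s \<ge> 0" using foot \<open>0 \<le> l\<close> by auto
    show "exp (s - t) * Rf \<alpha> c P' Q' (a s) s - exp (s - t) * Rf \<alpha> c P Q (a s) s = 0" if "s \<le> T"
      using agree[OF y, of s] that \<open>s \<ge> 0\<close> by (simp add: Rf_def)
    assume "T \<le> s"
    have "\<bar>Rf \<alpha> c P' Q' (a s) s - Rf \<alpha> c P Q (a s) s\<bar>
        \<le> 4 * \<alpha> * (\<bar>P' (a s) s - P (a s) s\<bar> + \<bar>Q' (a s) s - Q (a s) s\<bar>)"
      by (rule Rf_lipschitz_above_slack[OF y]) (use above[OF y, of s] s \<open>s \<ge> 0\<close> in auto)
    also have "\<dots> \<le> 4 * \<alpha> * D"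
      using close[OF y, of s] s \<open>T \<le> s\<close> alpha_nonneg by (intro mult_left_mono) auto
    finally have "\<bar>Rf \<alpha> c P' Q' (a s) s - Rf \<alpha> c P Q (a s) s\<bar> \<le> 4 * \<alpha> * D" .
    then show "\<bar>exp (s - t) * Rf \<alpha> c P' Q' (a s) s - exp (s - t) * Rf \<alpha> c P Q (a s) s\<bar> \<le> 4 * \<alpha> * D"
      using s mult_mono[of "exp (s - t)" 1 "\<bar>Rf \<alpha> c P' Q' (a s) s - Rf \<alpha> c P Q (a s) s\<bar>" "4 * \<alpha> * D"]
      by (simp add: abs_mult flip: right_diff_distrib)
  qed (use assms alpha_nonneg in auto)
  then show ?thesis by (simp add: integral_diff[OF integrable])
qed

lemma local_difference_bound:
  assumes sol: "mild_sol bc \<alpha> c u0 v0 U V" and "0 \<le> T" "T \<le> t" "0 \<le> D" and X: "X \<in> {0..1}"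
    and agree: "\<And>X s. X \<in> {0..1} \<Longrightarrow> s \<in> {0..T} \<Longrightarrow> U X s = U_sol X s \<and> V X s = V_sol X s"
    and above: "\<And>X s. X \<in> {0..1} \<Longrightarrow> s \<in> {0..t} \<Longrightarrow> U X s \<ge> - slack \<and> V X s \<ge> - slack"
    and close: "\<And>X s. X \<in> {0..1} \<Longrightarrow> s \<in> {T..t} \<Longrightarrow>
      \<bar>U X s - U_sol X s\<bar> + \<bar>V X s - V_sol X s\<bar> \<le> D"
  shows "\<bar>U X t - U_sol X t\<bar> + \<bar>V X t - V_sol X t\<bar> \<le> 8 * \<alpha> * D * (t - T)"
proof -
  have "t \<ge> 0" using assms by linarith
  note sol_eqs = sol[unfolded mild_sol_iff] mild_sol_sol[unfolded mild_sol_iff]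
  note along = continuous_on_mild_sol_along[OF sol X \<open>t \<ge> 0\<close>]
    continuous_on_mild_sol_along[OF mild_sol_sol X \<open>t \<ge> 0\<close>]
  have above': "U_sol y s \<ge> 0 \<and> V_sol y s \<ge> 0 \<and> U y s \<ge> - slack \<and> V y s \<ge> - slack"
    if "y \<in> {0..1}" "s \<in> {0..t}" for y s
    using sol_bounds[of s y] above[OF that] that by auto
  have "\<bar>U X t - U_sol X t\<bar>
      = \<bar>integral {entry_U X t..t} (\<lambda>s. exp (s - t) * Rf \<alpha> c U V (wrap (X + C * (s - t))) s)
        - integral {entry_U X t..t} (\<lambda>s. exp (s - t) * Rf \<alpha> c U_sol V_sol (wrap (X + C * (s - t))) s)\<bar>"
    using sol_eqs X \<open>t \<ge> 0\<close> by simp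
  also have "\<dots> \<le> 4 * \<alpha> * D * (t - T)"
    using entry_bounds(1)[of X t] X \<open>t \<ge> 0\<close> assms(2-4) agree close above'
    by (intro Rf_integral_diff wrap_in_unit along[of "\<lambda>y s. beta c y", simplified]) (auto intro: along)
  finally have "\<bar>U X t - U_sol X t\<bar> \<le> 4 * \<alpha> * D * (t - T)" .
  moreover have "\<bar>V X t - V_sol X t\<bar>
      = \<bar>integral {entry_V X t..t} (\<lambda>s. exp (s - t) * Rf \<alpha> c V U (wrap (X - C * (s - t))) s)
        - integral {entry_V X t..t} (\<lambda>s. exp (s - t) * Rf \<alpha> c V_sol U_sol (wrap (X - C * (s - t))) s)\<bar>"
    using sol_eqs X \<open>t \<ge> 0\<close> by simp
  moreover have "\<dots> \<le> 4 * \<alpha> * D * (t - T)"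
    using entry_bounds(2)[of X t] X \<open>t \<ge> 0\<close> assms(2-4) agree close above'
    by (intro Rf_integral_diff wrap_in_unit along[of "\<lambda>y s. beta c y", simplified])
       (auto intro: along simp: add.commute)
  ultimately show ?thesis by linarith
qed

lemma stays_above_slack:
  assumes sol: "mild_sol bc \<alpha> c u0 v0 U V" and "T \<ge> 0"
    and agree: "\<And>X s. X \<in> {0..1} \<Longrightarrow> s \<in> {0..T} \<Longrightarrow> U X s = U_sol X s \<and> V X s = V_sol X s"
  obtains \<epsilon> where "0 < \<epsilon>" "\<epsilon> \<le> 1"
    "\<And>X s. X \<in> {0..1} \<Longrightarrow> s \<in> {0..T + \<epsilon>} \<Longrightarrow> U X s \<ge> - slack \<and> V X s \<ge> - slack"
proof -
  have cont: "continuous_on ({0..1} \<times> {0..}) (\<lambda>(X, t). U X t)" "continuous_on ({0..1} \<times> {0..}) (\<lambda>(X, t). V X t)"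
    using sol unfolding mild_sol_iff by auto
  obtain dU where "dU > 0" and dU: "\<And>X s. X \<in> {0..1} \<Longrightarrow> T \<le> s \<Longrightarrow> s \<le> T + 1 \<Longrightarrow> s - T < dU
      \<Longrightarrow> \<bar>U X s - U X T\<bar> < slack"
    using uniformly_continuous_in_time[OF cont(1) \<open>T \<ge> 0\<close> slack_pos] by metis
  obtain dV where "dV > 0" and dV: "\<And>X s. X \<in> {0..1} \<Longrightarrow> T \<le> s \<Longrightarrow> s \<le> T + 1 \<Longrightarrow> s - T < dV
      \<Longrightarrow> \<bar>V X s - V X T\<bar> < slack"
    using uniformly_continuous_in_time[OF cont(2) \<open>T \<ge> 0\<close> slack_pos] by metis
  show ?thesis
  proof (rule that[of "min 1 (min dU dV / 2)"])
    fix X s :: real assume X: "X \<in> {0..1}" and s: "s \<in> {0..T + min 1 (min dU dV / 2)}"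
    show "U X s \<ge> - slack \<and> V X s \<ge> - slack"
    proof (cases "s \<le> T")
      case False
      have "U X T \<ge> 0" "V X T \<ge> 0" using agree[OF X, of T] sol_bounds[OF \<open>T \<ge> 0\<close>, of X] \<open>T \<ge> 0\<close> by auto
      moreover have "\<bar>U X s - U X T\<bar> < slack" "\<bar>V X s - V X T\<bar> < slack"
        using dU[OF X] dV[OF X] False s \<open>dU > 0\<close> \<open>dV > 0\<close> by auto
      ultimately show ?thesis by linarith
    qed (use agree[OF X, of s] sol_bounds[of s X] slack_pos s in auto)
  qed (use \<open>dU > 0\<close> \<open>dV > 0\<close> in auto)
qed

lemma extend_agreement:
  assumes sol: "mild_sol bc \<alpha> c u0 v0 U V" and "T \<ge> 0"
    and agree: "\<And>X s. X \<in> {0..1} \<Longrightarrow> s \<in> {0..T} \<Longrightarrow> U X s = U_sol X s \<and> V X s = V_sol X s"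
  obtains \<epsilon> where "\<epsilon> > 0"
    "\<And>X s. X \<in> {0..1} \<Longrightarrow> s \<in> {0..T + \<epsilon>} \<Longrightarrow> U X s = U_sol X s \<and> V X s = V_sol X s"
proof -
  obtain \<epsilon>0 where "\<epsilon>0 > 0"
    and above: "\<And>X s. X \<in> {0..1} \<Longrightarrow> s \<in> {0..T + \<epsilon>0} \<Longrightarrow> U X s \<ge> - slack \<and> V X s \<ge> - slack"
    using stays_above_slack[OF sol \<open>T \<ge> 0\<close> agree] by metis
  define \<epsilon> where "\<epsilon> = min \<epsilon>0 (1 / (16 * \<alpha> + 1))"
  have \<epsilon>: "0 < \<epsilon>" "\<epsilon> \<le> \<epsilon>0" "16 * \<alpha> * \<epsilon> \<le> 1"
    unfolding \<epsilon>_def using \<open>\<epsilon>0 > 0\<close> alpha_nonneg by (auto simp: min_def field_simps)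
  define K where "K = {0..1::real} \<times> {T..T + \<epsilon>}"
  define \<Delta> where "\<Delta> p = \<bar>U (fst p) (snd p) - U_sol (fst p) (snd p)\<bar> + \<bar>V (fst p) (snd p) - V_sol (fst p) (snd p)\<bar>"
    for p
  have "K \<subseteq> {0..1} \<times> {0..}" unfolding K_def using \<open>T \<ge> 0\<close> by auto
  then have cont: "continuous_on K \<Delta>"
    using sol mild_sol_sol unfolding mild_sol_iff \<Delta>_def split_beta
    by (auto intro!: continuous_intros intro: continuous_on_subset)
  have zero: "\<Delta> p = 0" if "p \<in> K" for p
  proof (rule zero_if_le_half_of_bounds[of K \<Delta>, OF _ cont _ _ that])
    fix D p assume bound: "\<And>p. p \<in> K \<Longrightarrow> \<Delta> p \<le> D" and "0 \<le> D" and "p \<in> K"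
    then obtain X s where p: "p = (X, s)" and X: "X \<in> {0..1}" and s: "T \<le> s" "s \<le> T + \<epsilon>"
      unfolding K_def by auto
    have "\<Delta> p \<le> 8 * \<alpha> * D * (s - T)"
      unfolding p \<Delta>_def fst_conv snd_conv using bound[unfolded K_def \<Delta>_def] above \<epsilon> s X \<open>T \<ge> 0\<close> \<open>0 \<le> D\<close>
      by (intro local_difference_bound[OF sol _ s(1) _ X agree]) auto
    also have "\<dots> \<le> 8 * \<alpha> * D * \<epsilon>"
      using s alpha_nonneg \<open>0 \<le> D\<close> by (intro mult_left_mono) auto
    also have "\<dots> = (16 * \<alpha> * \<epsilon>) * (D / 2)" by simp
    also have "\<dots> \<le> D / 2"
      using \<epsilon> alpha_nonneg \<open>0 \<le> D\<close> by (intro mult_left_le_one_le) auto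
    finally show "\<Delta> p \<le> D / 2" .
  qed (auto simp: K_def \<Delta>_def intro!: compact_Times)
  show ?thesis
  proof (rule that[OF \<epsilon>(1)])
    fix X s :: real assume "X \<in> {0..1}" "s \<in> {0..T + \<epsilon>}"
    then show "U X s = U_sol X s \<and> V X s = V_sol X s"
      using agree zero[of "(X, s)"] unfolding K_def \<Delta>_def by (cases "s \<le> T") auto
  qed
qed

lemma agreement_at_limit:
  assumes sol: "mild_sol bc \<alpha> c u0 v0 U V" and "T \<ge> 0" and X: "X \<in> {0..1}"
    and before: "\<And>s. 0 \<le> s \<Longrightarrow> s < T \<Longrightarrow> U X s = U_sol X s \<and> V X s = V_sol X s"
  shows "U X T = U_sol X T \<and> V X T = V_sol X T"
proof (cases "T = 0")
  case True
  have "entry_U X 0 = 0" "entry_V X 0 = 0" using entry_bounds[of X 0] X by auto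
  then show ?thesis
    using sol mild_sol_sol X True unfolding mild_sol_iff by auto
next
  case False
  have slice: "continuous_on {0..T} (\<lambda>s. W X s)" if "mild_sol bc \<alpha> c u0 v0 W W' \<or> mild_sol bc \<alpha> c u0 v0 W' W" for W W'
  proof -
    have "continuous_on ({0..1} \<times> {0..}) (\<lambda>(y, s). W y s)"
      using that unfolding mild_sol_iff by auto
    then have "continuous_on {0..T} (\<lambda>s. (\<lambda>(y, s). W y s) (X, s))"
      by (rule continuous_on_compose2) (use X in \<open>auto intro!: continuous_intros\<close>)
    then show ?thesis by simp
  qed
  have cont: "continuous_on {0..T} (\<lambda>s. U X s - U_sol X s)" "continuous_on {0..T} (\<lambda>s. V X s - V_sol X s)"
    using sol mild_sol_sol by (intro continuous_on_diff slice; blast)+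
  have closure: "closure {0..<T} = {0..T}" using False \<open>T \<ge> 0\<close> by simp
  have "U X T - U_sol X T = 0" "V X T - V_sol X T = 0"
    using continuous_constant_on_closure[of "{0..<T}" "\<lambda>s. U X s - U_sol X s" 0 T]
      continuous_constant_on_closure[of "{0..<T}" "\<lambda>s. V X s - V_sol X s" 0 T]
      cont closure before \<open>T \<ge> 0\<close> by auto
  then show ?thesis by simp
qed

lemma mild_sol_unique:
  assumes sol: "mild_sol bc \<alpha> c u0 v0 U V" and "X \<in> {0..1}" "t \<ge> 0"
  shows "U X t = U_sol X t \<and> V X t = V_sol X t"
proof (rule ccontr)
  define B where "B = {s. 0 \<le> s \<and> (\<exists>X\<in>{0..1}. \<not> (U X s = U_sol X s \<and> V X s = V_sol X s))}"
  assume "\<not> (U X t = U_sol X t \<and> V X t = V_sol X t)"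
  then have "t \<in> B" unfolding B_def using assms by auto
  have bdd: "bdd_below B" unfolding B_def by (rule bdd_belowI[of _ 0]) auto
  define T where "T = Inf B"
  have "T \<ge> 0" unfolding T_def using \<open>t \<in> B\<close> by (intro cInf_greatest) (auto simp: B_def)
  have "U X s = U_sol X s \<and> V X s = V_sol X s" if "X \<in> {0..1}" "0 \<le> s" "s < T" for X s
    using cInf_lower[OF _ bdd, of s] that unfolding B_def T_def by force
  then have "U X s = U_sol X s \<and> V X s = V_sol X s" if "X \<in> {0..1}" "s \<in> {0..T}" for X s
    using agreement_at_limit[OF sol \<open>T \<ge> 0\<close>] that by (cases "s = T") auto
  then obtain \<epsilon> where "\<epsilon> > 0"
    and agree: "\<And>X s. X \<in> {0..1} \<Longrightarrow> s \<in> {0..T + \<epsilon>} \<Longrightarrow> U X s = U_sol X s \<and> V X s = V_sol X s"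
    using extend_agreement[OF sol \<open>T \<ge> 0\<close>] by metis
  obtain b where "b \<in> B" "b < T + \<epsilon>"
    using cInf_less_iff[OF _ bdd, of "T + \<epsilon>"] \<open>t \<in> B\<close> \<open>\<epsilon> > 0\<close> unfolding T_def by auto
  moreover have "T \<le> b" unfolding T_def by (rule cInf_lower[OF \<open>b \<in> B\<close> bdd])
  ultimately show False using agree unfolding B_def by auto
qed

end

theorem proposition3p1:
  fixes bc :: bcond and \<alpha> cl cu :: real and c u0 v0 :: "real \<Rightarrow> real"
  assumes "\<alpha> \<ge> 0"
    and "continuous_on {0..1} u0" and "continuous_on {0..1} v0" and "continuous_on {0..1} c"
    and "\<forall>x\<in>{0..1}. u0 x \<ge> 0 \<and> v0 x \<ge> 0"
    and "0 < cl" and "\<forall>x\<in>{0..1}. cl \<le> c x \<and> c x \<le> cu"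
    and "compat bc c u0 v0"
  shows "\<exists>U V. mild_sol bc \<alpha> c u0 v0 U V
      \<and> (\<forall>U' V'. mild_sol bc \<alpha> c u0 v0 U' V' \<longrightarrow>
            (\<forall>X\<in>{0..1}. \<forall>t\<ge>0. U' X t = U X t \<and> V' X t = V X t))
      \<and> (\<forall>x\<in>{0..1}. \<forall>t\<ge>0.
            0 \<le> phys c U x t \<and> phys c U x t \<le> cu / cl * max (Sup (u0 ` {0..1})) \<alpha> \<and>
            0 \<le> phys c V x t \<and> phys c V x t \<le> cu / cl * max (Sup (v0 ` {0..1})) \<alpha>)"
proof -
  interpret transport_problem c cl cu bc \<alpha> u0 v0
    using assms by unfold_locales auto
  show ?thesis
    using mild_sol_sol mild_sol_unique phys_bounds by blast
qed

end
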